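(* Let $\boldsymbol\mu\in\mathbb{C}_+^n$ have distinct entries, so that $\mathcal{V}(\boldsymbol\mu)=\operatorname{span}\{v[\mu_k]\}_{k=1}^n$ is an $n$-dimensional subspace of $\mathcal{H}_2$, and let $\boldsymbol\lambda\in\mathbb{C}_-^r$ have distinct entries, so that $\mathcal{T}(\boldsymbol\lambda)=\operatorname{span}\{v[-\overline{\lambda_j}],v[-\overline{\lambda_j}]'\}_{j=1}^r$ is a $2r$-dimensional subspace of $\mathcal{H}_2$. Let $\epsilon>0$. If for each $\lambda_k$ there exist entries of $\boldsymbol\mu$, denoted $\mu_{k,1},\mu_{k,2},\mu_{k,3}$, with $|\mu_{k,t}+\overline{\lambda_k}|\le\epsilon$ for $t=1,2,3$, and no entry $\mu_{k,t}$ is repeated, then there exists a constant $C$ independent of $\epsilon$ such that $$\sin\phi_{\max}(\mathcal{T}(\boldsymbol\lambda),\mathcal{V}(\boldsymbol\mu))\le C\epsilon.$$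
   Context: $\mathcal{H}_2$ is the Hilbert space of functions analytic in the right half-plane with inner product $\langle F,G\rangle_{\mathcal{H}_2}=\frac{1}{2\pi}\int_{-\infty}^{\infty}\overline{F(\mathrm{i}\omega)}G(\mathrm{i}\omega)\,d\omega$. $\mathbb{C}_+=\{\operatorname{Re}z>0\}$, $\mathbb{C}_-=\{\operatorname{Re}z<0\}$. For $\mu\in\mathbb{C}_+$, $v[\mu](z)=(z+\overline\mu)^{-1}$ and $v[\mu]'(z)=-(z+\overline\mu)^{-2}$. Subspace angles: for finite-dimensional subspaces $\mathcal{X},\mathcal{Y}\subset\mathcal{H}_2$ of dimensions $m,n$ with unitary basis operators $B_{\mathcal{X}}:\mathbb{C}^m\to\mathcal{X}$, $B_{\mathcal{Y}}:\mathbb{C}^n\to\mathcal{Y}$, the principal angles $\phi_1\le\dots\le\phi_{\min(m,n)}$ satisfy $\cos\phi_k=\sigma_k(B_{\mathcal{X}}^*B_{\mathcal{Y}})$ (singular values in descending order), and $\phi_{\max}(\mathcal{X},\mathcal{Y})$ is the largest principal angle. *)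

theory Defs
  imports "HOL-Analysis.Analysis"
begin

text \<open>H2 inner product on the imaginary axis (functions analytic in the right half-plane
  are represented as functions complex => complex).\<close>
definition H2_inner :: "(complex \<Rightarrow> complex) \<Rightarrow> (complex \<Rightarrow> complex) \<Rightarrow> complex" where
  "H2_inner F G =
     (LINT \<omega>|lborel. cnj (F (\<i> * complex_of_real \<omega>)) * G (\<i> * complex_of_real \<omega>)) / (2 * pi)"

definition vfun :: "complex \<Rightarrow> complex \<Rightarrow> complex" where
  "vfun \<mu> z = 1 / (z + cnj \<mu>)"

definition vfun' :: "complex \<Rightarrow> complex \<Rightarrow> complex" where
  "vfun' \<mu> z = - 1 / (z + cnj \<mu>) ^ 2"

definition cspan :: "(complex \<Rightarrow> complex) list \<Rightarrow> (complex \<Rightarrow> complex) set" where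
  "cspan fs = {(\<lambda>z. \<Sum>k<length fs. c k * (fs ! k) z) | c. True}"

definition Vspace :: "complex list \<Rightarrow> (complex \<Rightarrow> complex) set" where
  "Vspace mus = cspan (map vfun mus)"

definition Tspace :: "complex list \<Rightarrow> (complex \<Rightarrow> complex) set" where
  "Tspace ls = cspan (concat (map (\<lambda>l. [vfun (- cnj l), vfun' (- cnj l)]) ls))"

text \<open>A unitary basis operator C^m -> X is given by an orthonormal basis list of X.\<close>
definition is_onb :: "(complex \<Rightarrow> complex) set \<Rightarrow> (complex \<Rightarrow> complex) list \<Rightarrow> bool" where
  "is_onb X bs \<longleftrightarrow> set bs \<subseteq> X \<and> X \<subseteq> cspan bs \<and>
     (\<forall>i<length bs. \<forall>j<length bs. H2_inner (bs ! i) (bs ! j) = (if i = j then 1 else 0))"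

definition cmat_eigenvalue :: "nat \<Rightarrow> (nat \<Rightarrow> nat \<Rightarrow> complex) \<Rightarrow> complex \<Rightarrow> bool" where
  "cmat_eigenvalue p P e \<longleftrightarrow>
     (\<exists>v. (\<exists>i<p. v i \<noteq> 0) \<and> (\<forall>i<p. (\<Sum>j<p. P i j * v j) = e * v i))"

definition singular_values :: "nat \<Rightarrow> nat \<Rightarrow> (nat \<Rightarrow> nat \<Rightarrow> complex) \<Rightarrow> real set" where
  "singular_values m n M =
     (if m \<le> n
      then {\<sigma>. \<sigma> \<ge> 0 \<and> cmat_eigenvalue m (\<lambda>i k. \<Sum>j<n. M i j * cnj (M k j)) (complex_of_real (\<sigma>\<^sup>2))}
      else {\<sigma>. \<sigma> \<ge> 0 \<and> cmat_eigenvalue n (\<lambda>i k. \<Sum>j<m. cnj (M j i) * M j k) (complex_of_real (\<sigma>\<^sup>2))})"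

text \<open>Largest principal angle: cos phi_max = sigma_min(m,n)(B_X^* B_Y), the smallest singular value,
  for unitary basis operators (orthonormal bases) of X and Y.\<close>
definition phi_max :: "(complex \<Rightarrow> complex) set \<Rightarrow> (complex \<Rightarrow> complex) set \<Rightarrow> real" where
  "phi_max X Y =
     (let bx = (SOME bs. is_onb X bs); by = (SOME bs. is_onb Y bs)
      in arccos (Min (singular_values (length bx) (length by)
                        (\<lambda>i j. H2_inner (bx ! i) (by ! j)))))"

end

theory Submission
  imports Defs "HOL-Complex_Analysis.Complex_Analysis" "HOL-Probability.Sinc_Integral"
    "Jordan_Normal_Form.Char_Poly" "HOL-Library.Function_Algebras"
begin

(* Let X = T(lambda) and Y = V(mu). The generators of X are the simple poles 1/(z - lambda_k)
   and the double poles -1/(z - lambda_k)^2. If mu_1 and mu_2 are distinct and within epsilon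
   of -conj lambda_k, then v[mu_1] approximates the simple pole and the divided difference
   (v[mu_2] - v[mu_1]) / (conj mu_2 - conj mu_1) approximates the double pole, with pointwise
   error O(epsilon) / |i omega - lambda_k| on the imaginary axis, hence O(epsilon) in H2.
   As X is finite-dimensional, every x in X is a combination of the generators with
   coefficients bounded by C |x|, so dist(x, Y) <= K epsilon |x| with K independent of epsilon
   and mu. For orthonormal bases of X and Y with cross-Gram matrix M, every eigenvalue of
   M M^* is a Rayleigh quotient |P_Y x|^2 / |x|^2, hence lies in [1 - K^2 epsilon^2, 1], and
   sin phi_max = sqrt (1 - sigma_min^2) <= K epsilon; for epsilon above a fixed threshold
   sin <= 1 suffices. The orthonormal bases exist, and dim X <= 2r <= 3r <= dim Y, because a
   combination of partial fractions with distinct poles off the imaginary axis that vanishes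
   on the axis vanishes identically (identity theorem), so its coefficients are 0. Only two of
   the three entries mu_(k,t) near each lambda_k are needed for the approximation. *)

section \<open>Square-integrable functions on the imaginary axis\<close>

(* H2_inner is a Bochner integral, hence 0 when its integrand is not integrable; for
   H2-regular functions every such integrand is integrable (integrable_H2_product), so
   H2_inner is sesquilinear on them. *)
definition H2_regular :: "(complex \<Rightarrow> complex) \<Rightarrow> bool" where
  "H2_regular f \<longleftrightarrow> continuous_on UNIV (\<lambda>\<omega>::real. f (\<i> * of_real \<omega>)) \<and>
     (\<exists>K. \<forall>\<omega>::real. (cmod (f (\<i> * of_real \<omega>)))\<^sup>2 \<le> K / (1 + \<omega>\<^sup>2))"

lemma power2_norm_add_le:
  fixes x y :: "'a::real_normed_vector"
  shows "(norm (x + y))\<^sup>2 \<le> 2 * (norm x)\<^sup>2 + 2 * (norm y)\<^sup>2"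
proof -
  have "(norm (x + y))\<^sup>2 \<le> (norm x + norm y)\<^sup>2"
    by (simp add: norm_triangle_ineq power_mono)
  also have "\<dots> \<le> 2 * (norm x)\<^sup>2 + 2 * (norm y)\<^sup>2"
    using sum_squares_ge_zero[of "norm x - norm y" 0] by (simp add: power2_eq_square algebra_simps)
  finally show ?thesis .
qed

lemma H2_regular_add:
  assumes "H2_regular f" "H2_regular g"
  shows "H2_regular (\<lambda>z. f z + g z)"
proof -
  obtain K L where K: "\<And>\<omega>::real. (cmod (f (\<i> * of_real \<omega>)))\<^sup>2 \<le> K / (1 + \<omega>\<^sup>2)"
    and L: "\<And>\<omega>::real. (cmod (g (\<i> * of_real \<omega>)))\<^sup>2 \<le> L / (1 + \<omega>\<^sup>2)"
    using assms unfolding H2_regular_def by blast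
  have "(cmod (f (\<i> * of_real \<omega>) + g (\<i> * of_real \<omega>)))\<^sup>2 \<le> (2 * K + 2 * L) / (1 + \<omega>\<^sup>2)"
    for \<omega> :: real
    using power2_norm_add_le[of "f (\<i> * of_real \<omega>)" "g (\<i> * of_real \<omega>)"] K[of \<omega>] L[of \<omega>]
    by (simp add: add_divide_distrib)
  moreover have "continuous_on UNIV (\<lambda>\<omega>::real. f (\<i> * of_real \<omega>) + g (\<i> * of_real \<omega>))"
    using assms unfolding H2_regular_def by (intro continuous_intros) auto
  ultimately show ?thesis unfolding H2_regular_def by blast
qed

lemma H2_regular_scale: "H2_regular f \<Longrightarrow> H2_regular (\<lambda>z. c * f z)"
proof -
  assume f: "H2_regular f"
  then obtain K where K: "\<And>\<omega>::real. (cmod (f (\<i> * of_real \<omega>)))\<^sup>2 \<le> K / (1 + \<omega>\<^sup>2)"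
    unfolding H2_regular_def by blast
  have "(cmod (c * f (\<i> * of_real \<omega>)))\<^sup>2 \<le> (cmod c)\<^sup>2 * K / (1 + \<omega>\<^sup>2)" for \<omega> :: real
    using mult_left_mono[OF K[of \<omega>], of "(cmod c)\<^sup>2"] by (simp add: norm_mult power_mult_distrib)
  moreover have "continuous_on UNIV (\<lambda>\<omega>::real. c * f (\<i> * of_real \<omega>))"
    using f unfolding H2_regular_def by (intro continuous_intros) auto
  ultimately show ?thesis unfolding H2_regular_def by blast
qed

lemma H2_regular_zero: "H2_regular (\<lambda>z. 0)"
  unfolding H2_regular_def by (auto intro: exI[of _ 0])

lemma H2_regular_diff: "H2_regular f \<Longrightarrow> H2_regular g \<Longrightarrow> H2_regular (\<lambda>z. f z - g z)"
  using H2_regular_add[of f "\<lambda>z. - 1 * g z"] H2_regular_scale[of g "- 1"] by simp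

lemma H2_regular_sum:
  "finite A \<Longrightarrow> (\<And>k. k \<in> A \<Longrightarrow> H2_regular (f k)) \<Longrightarrow> H2_regular (\<lambda>z. \<Sum>k\<in>A. f k z)"
  by (induction A rule: finite_induct) (simp_all add: H2_regular_zero H2_regular_add)

lemma H2_regular_lincomb:
  "finite A \<Longrightarrow> (\<And>k. k \<in> A \<Longrightarrow> H2_regular (f k)) \<Longrightarrow> H2_regular (\<lambda>z. \<Sum>k\<in>A. c k * f k z)"
  by (intro H2_regular_sum H2_regular_scale)

definition pole_weight :: "complex \<Rightarrow> real" where
  "pole_weight a = (1 + 2 * (Im a)\<^sup>2) / (Re a)\<^sup>2 + 2"

lemma pole_weight_pos: "pole_weight a > 0"
proof -
  have "(1 + 2 * (Im a)\<^sup>2) / (Re a)\<^sup>2 \<ge> 0" by simp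
  then show ?thesis unfolding pole_weight_def by linarith
qed

lemma inverse_power2_dist_le:
  assumes "Re a \<noteq> 0"
  shows "1 / (cmod (\<i> * of_real \<omega> - a))\<^sup>2 \<le> pole_weight a / (1 + \<omega>\<^sup>2)"
proof -
  define r s t where "r = Re a" and "s = Im a" and "t = (Re a)\<^sup>2 + (\<omega> - Im a)\<^sup>2"
  have r2: "r\<^sup>2 > 0" using assms by (simp add: r_def)
  have t: "(cmod (\<i> * of_real \<omega> - a))\<^sup>2 = t"
    unfolding t_def cmod_power2 by (simp add: power2_eq_square algebra_simps)
  have "\<omega>\<^sup>2 \<le> 2 * s\<^sup>2 + 2 * (\<omega> - s)\<^sup>2"
    using power2_norm_add_le[of s "\<omega> - s"] by simp
  moreover have "(1 + 2 * s\<^sup>2) / r\<^sup>2 * t = 1 + 2 * s\<^sup>2 + (1 + 2 * s\<^sup>2) / r\<^sup>2 * (\<omega> - s)\<^sup>2"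
    unfolding t_def r_def s_def using r2 by (simp add: field_simps r_def)
  moreover have "(1 + 2 * s\<^sup>2) / r\<^sup>2 * (\<omega> - s)\<^sup>2 \<ge> 0" by simp
  moreover have "pole_weight a * t = (1 + 2 * s\<^sup>2) / r\<^sup>2 * t + 2 * t"
    by (simp add: pole_weight_def r_def s_def algebra_simps)
  moreover have "(\<omega> - s)\<^sup>2 \<le> t" unfolding t_def s_def by simp
  ultimately have "1 + \<omega>\<^sup>2 \<le> pole_weight a * t" by linarith
  moreover have "t > 0" unfolding t_def using r2 by (simp add: r_def add_pos_nonneg)
  ultimately show ?thesis unfolding t by (simp add: field_simps add_pos_nonneg)
qed

lemma imag_axis_plus_nonzero:
  assumes "Re c \<noteq> 0"
  shows "\<i> * of_real \<omega> + c \<noteq> 0"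
proof -
  have "Re (\<i> * of_real \<omega> + c) = Re c" by simp
  then show ?thesis using assms by (metis zero_complex.sel(1))
qed

lemma H2_regular_vfun:
  assumes "Re \<mu> \<noteq> 0"
  shows "H2_regular (vfun \<mu>)"
proof -
  have "(cmod (vfun \<mu> (\<i> * of_real \<omega>)))\<^sup>2 \<le> pole_weight (- cnj \<mu>) / (1 + \<omega>\<^sup>2)" for \<omega> :: real
    using inverse_power2_dist_le[of "- cnj \<mu>" \<omega>] assms unfolding vfun_def
    by (simp add: norm_divide power_divide)
  moreover have "continuous_on UNIV (\<lambda>\<omega>::real. vfun \<mu> (\<i> * of_real \<omega>))"
    unfolding vfun_def using assms imag_axis_plus_nonzero by (intro continuous_intros) auto
  ultimately show ?thesis unfolding H2_regular_def by blast
qed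

lemma H2_regular_vfun':
  assumes "Re \<mu> \<noteq> 0"
  shows "H2_regular (vfun' \<mu>)"
proof -
  define K where "K = pole_weight (- cnj \<mu>)"
  have K: "1 / (cmod (\<i> * of_real \<omega> - - cnj \<mu>))\<^sup>2 \<le> K / (1 + \<omega>\<^sup>2)" for \<omega> :: real
    unfolding K_def using inverse_power2_dist_le[of "- cnj \<mu>"] assms by simp
  have "(cmod (vfun' \<mu> (\<i> * of_real \<omega>)))\<^sup>2 \<le> (K / (Re \<mu>)\<^sup>2) / (1 + \<omega>\<^sup>2)" for \<omega> :: real
  proof -
    define d where "d = (cmod (\<i> * of_real \<omega> + cnj \<mu>))\<^sup>2"
    have "d = (Re \<mu>)\<^sup>2 + (\<omega> - Im \<mu>)\<^sup>2"
      unfolding d_def cmod_power2 by (simp add: power2_eq_square algebra_simps)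
    then have "1 / d \<le> 1 / (Re \<mu>)\<^sup>2" using assms by (simp add: frac_le)
    moreover have "1 / d \<le> K / (1 + \<omega>\<^sup>2)" using K[of \<omega>] by (simp add: d_def)
    ultimately have "(1 / d) * (1 / d) \<le> (1 / (Re \<mu>)\<^sup>2) * (K / (1 + \<omega>\<^sup>2))"
      by (intro mult_mono) (auto simp: d_def)
    then show ?thesis unfolding vfun'_def d_def by (simp add: norm_divide norm_mult power2_eq_square mult_ac)
  qed
  moreover have "continuous_on UNIV (\<lambda>\<omega>::real. vfun' \<mu> (\<i> * of_real \<omega>))"
    unfolding vfun'_def using assms imag_axis_plus_nonzero by (intro continuous_intros) auto
  ultimately show ?thesis unfolding H2_regular_def by blast
qed

lemma integrable_inverse_1_plus_square_lborel: "integrable lborel (\<lambda>x::real. inverse (1 + x\<^sup>2))"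
  using integrable_inverse_1_plus_square by (simp add: set_integrable_def einterval_eq_UNIV)

lemma lebesgue_integral_inverse_1_plus_square: "(LINT x|lborel. inverse (1 + x\<^sup>2)) = pi"
  using LBINT_inverse_1_plus_square
  by (simp add: interval_lebesgue_integral_def set_lebesgue_integral_def einterval_eq_UNIV)

lemma integrable_H2_product:
  assumes f: "H2_regular f" and g: "H2_regular g"
  shows "integrable lborel (\<lambda>\<omega>::real. cnj (f (\<i> * of_real \<omega>)) * g (\<i> * of_real \<omega>))"
proof -
  obtain K L where K: "\<And>\<omega>::real. (cmod (f (\<i> * of_real \<omega>)))\<^sup>2 \<le> K / (1 + \<omega>\<^sup>2)"
    and L: "\<And>\<omega>::real. (cmod (g (\<i> * of_real \<omega>)))\<^sup>2 \<le> L / (1 + \<omega>\<^sup>2)"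
    using assms unfolding H2_regular_def by blast
  have "norm (cnj (f (\<i> * of_real \<omega>)) * g (\<i> * of_real \<omega>)) \<le> norm ((K + L) * inverse (1 + \<omega>\<^sup>2))"
    for \<omega> :: real
  proof -
    define a b where "a = cmod (f (\<i> * of_real \<omega>))" and "b = cmod (g (\<i> * of_real \<omega>))"
    have "norm (cnj (f (\<i> * of_real \<omega>)) * g (\<i> * of_real \<omega>)) = a * b"
      by (simp add: a_def b_def norm_mult)
    also have "\<dots> \<le> a\<^sup>2 + b\<^sup>2"
    proof -
      have "0 \<le> a * b" by (simp add: a_def b_def)
      then show ?thesis using sum_squares_bound[of a b] by linarith
    qed
    also have "\<dots> \<le> (K + L) * inverse (1 + \<omega>\<^sup>2)"
      using K[of \<omega>] L[of \<omega>] unfolding a_def b_def by (simp add: divide_inverse distrib_right)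
    finally show ?thesis by simp
  qed
  moreover have "(\<lambda>\<omega>::real. cnj (f (\<i> * of_real \<omega>)) * g (\<i> * of_real \<omega>)) \<in> borel_measurable lborel"
  proof -
    have "continuous_on UNIV (\<lambda>\<omega>::real. cnj (f (\<i> * of_real \<omega>)) * g (\<i> * of_real \<omega>))"
      using f g unfolding H2_regular_def by (intro continuous_intros) auto
    then show ?thesis by (auto intro: borel_measurable_continuous_onI)
  qed
  ultimately show ?thesis
    by (intro Bochner_Integration.integrable_bound[OF integrable_mult_right[OF
          integrable_inverse_1_plus_square_lborel, of "K + L"]]) auto
qed

lemma H2_inner_commute: "H2_inner g f = cnj (H2_inner f g)"
  unfolding H2_inner_def complex_cnj_divide Bochner_Integration.integral_cnj[symmetric]
  by (simp add: mult.commute)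

lemma H2_inner_scale_right: "H2_inner f (\<lambda>z. c * g z) = c * H2_inner f g"
  unfolding H2_inner_def by (simp add: mult.left_commute)

lemma H2_inner_scale_left: "H2_inner (\<lambda>z. c * g z) f = cnj c * H2_inner g f"
  by (subst (1 2) H2_inner_commute) (simp add: H2_inner_scale_right)

lemma H2_inner_add_right:
  assumes "H2_regular f" "H2_regular g" "H2_regular h"
  shows "H2_inner f (\<lambda>z. g z + h z) = H2_inner f g + H2_inner f h"
  unfolding H2_inner_def
  using integrable_H2_product[OF assms(1,2)] integrable_H2_product[OF assms(1,3)]
  by (simp add: distrib_left add_divide_distrib)

lemma H2_inner_diff_right:
  assumes "H2_regular f" "H2_regular g" "H2_regular h"
  shows "H2_inner f (\<lambda>z. g z - h z) = H2_inner f g - H2_inner f h"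
  using H2_inner_add_right[OF assms(1,2) H2_regular_scale[OF assms(3)], of "- 1"]
    H2_inner_scale_right[of f "- 1" h]
  by simp

lemma H2_inner_diff_left:
  assumes "H2_regular f" "H2_regular g" "H2_regular h"
  shows "H2_inner (\<lambda>z. g z - h z) f = H2_inner g f - H2_inner h f"
proof -
  have "H2_inner (\<lambda>z. g z - h z) f = cnj (H2_inner f g - H2_inner f h)"
    by (subst H2_inner_commute) (simp add: H2_inner_diff_right[OF assms])
  then show ?thesis by (simp add: H2_inner_commute[of g f, symmetric] H2_inner_commute[of h f, symmetric])
qed

lemma H2_inner_lincomb_right:
  assumes "finite A" "H2_regular f" "\<And>k. k \<in> A \<Longrightarrow> H2_regular (g k)"
  shows "H2_inner f (\<lambda>z. \<Sum>k\<in>A. c k * g k z) = (\<Sum>k\<in>A. c k * H2_inner f (g k))"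
  using assms
proof (induction A rule: finite_induct)
  case empty
  then show ?case by (simp add: H2_inner_def)
next
  case (insert x F)
  then have "H2_inner f (\<lambda>z. c x * g x z + (\<Sum>k\<in>F. c k * g k z))
      = H2_inner f (\<lambda>z. c x * g x z) + H2_inner f (\<lambda>z. \<Sum>k\<in>F. c k * g k z)"
    by (intro H2_inner_add_right H2_regular_scale H2_regular_lincomb) auto
  with insert show ?case by (simp add: H2_inner_scale_right)
qed

lemma H2_inner_lincomb_left:
  assumes "finite A" "H2_regular f" "\<And>k. k \<in> A \<Longrightarrow> H2_regular (g k)"
  shows "H2_inner (\<lambda>z. \<Sum>k\<in>A. c k * g k z) f = (\<Sum>k\<in>A. cnj (c k) * H2_inner (g k) f)"
  by (subst (1 2) H2_inner_commute) (simp add: H2_inner_lincomb_right[OF assms] cnj_sum)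

definition H2_sqnorm :: "(complex \<Rightarrow> complex) \<Rightarrow> real" where
  "H2_sqnorm f = (LINT \<omega>|lborel. (cmod (f (\<i> * of_real \<omega>)))\<^sup>2) / (2 * pi)"

lemma cnj_mult_self: "cnj z * z = of_real ((cmod z)\<^sup>2)"
  unfolding complex_norm_square by (rule mult.commute)

lemma H2_inner_self: "H2_inner f f = of_real (H2_sqnorm f)"
  unfolding H2_inner_def H2_sqnorm_def cnj_mult_self integral_complex_of_real by simp

lemma H2_sqnorm_nonneg: "H2_sqnorm f \<ge> 0"
  unfolding H2_sqnorm_def by (intro divide_nonneg_pos integral_nonneg_AE) auto

lemma integrable_H2_sqnorm:
  assumes "H2_regular f"
  shows "integrable lborel (\<lambda>\<omega>::real. (cmod (f (\<i> * of_real \<omega>)))\<^sup>2)"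
  using integrable_H2_product[OF assms assms]
  unfolding cnj_mult_self complex_of_real_integrable_eq .

lemma H2_sqnorm_le:
  assumes "H2_regular f" "\<And>\<omega>::real. (cmod (f (\<i> * of_real \<omega>)))\<^sup>2 \<le> B / (1 + \<omega>\<^sup>2)"
  shows "H2_sqnorm f \<le> B / 2"
proof -
  have "(LINT \<omega>|lborel. (cmod (f (\<i> * of_real \<omega>)))\<^sup>2) \<le> (LINT \<omega>|lborel. B * inverse (1 + \<omega>\<^sup>2))"
    using assms by (intro integral_mono integrable_H2_sqnorm integrable_mult_right
        integrable_inverse_1_plus_square_lborel) (simp_all add: divide_inverse)
  then show ?thesis
    by (simp add: H2_sqnorm_def lebesgue_integral_inverse_1_plus_square pos_divide_le_eq mult.commute)
qed

lemma H2_sqnorm_eq_0_imp: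
  assumes "H2_regular f" "H2_sqnorm f = 0"
  shows "f (\<i> * of_real \<omega>) = 0"
proof -
  have "AE x in lborel. (cmod (f (\<i> * of_real x)))\<^sup>2 = 0"
    using assms integral_nonneg_eq_0_iff_AE[OF integrable_H2_sqnorm[OF assms(1)]]
    by (simp add: H2_sqnorm_def)
  then have "AE x \<in> UNIV in lebesgue. x \<in> {x. f (\<i> * of_real x) = 0}"
    by (auto dest: AE_completion)
  moreover have "closed {x. f (\<i> * of_real x) = 0}"
    using assms(1) continuous_closed_preimage_constant[of UNIV "\<lambda>x::real. f (\<i> * of_real x)" 0]
    unfolding H2_regular_def by simp
  ultimately have "\<omega> \<in> {x. f (\<i> * of_real x) = 0}"
    using mem_closed_if_AE_lebesgue_open[OF open_UNIV] by blast
  then show ?thesis by simp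
qed

section \<open>Spans and orthonormal bases\<close>

interpretation cfun: vector_space "\<lambda>(c::complex) (f::complex \<Rightarrow> complex) z. c * f z"
  by unfold_locales (auto simp: fun_eq_iff algebra_simps plus_fun_def)

lemma lincomb_in_span:
  assumes "finite A" "\<And>k. k \<in> A \<Longrightarrow> g k \<in> cfun.span S"
  shows "(\<lambda>z. \<Sum>k\<in>A. c k * g k z) \<in> cfun.span S"
  using assms
proof (induction A rule: finite_induct)
  case empty
  show ?case using cfun.span_zero by (simp add: zero_fun_def)
next
  case (insert x F)
  then have "(\<lambda>z. c x * g x z) + (\<lambda>z. \<Sum>k\<in>F. c k * g k z) \<in> cfun.span S"
    by (intro cfun.span_add cfun.span_scale) auto
  with insert show ?case by (simp add: plus_fun_def)
qed

lemma cspan_eq_span: "cspan fs = cfun.span (set fs)"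
proof
  show "cspan fs \<subseteq> cfun.span (set fs)"
    unfolding cspan_def by (auto intro!: lincomb_in_span simp: cfun.span_base)
  have "cfun.subspace (cspan fs)"
    unfolding cfun.subspace_def cspan_def
  proof (intro conjI ballI allI)
    show "0 \<in> {\<lambda>z. \<Sum>k<length fs. c k * (fs ! k) z |c. True}"
      by (rule CollectI, rule exI[of _ "\<lambda>k. 0"]) (simp add: zero_fun_def)
  next
    fix x y assume "x \<in> {\<lambda>z. \<Sum>k<length fs. c k * (fs ! k) z |c. True}"
      "y \<in> {\<lambda>z. \<Sum>k<length fs. c k * (fs ! k) z |c. True}"
    then obtain c d where "x = (\<lambda>z. \<Sum>k<length fs. c k * (fs ! k) z)"
      "y = (\<lambda>z. \<Sum>k<length fs. d k * (fs ! k) z)" by blast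
    then have "x + y = (\<lambda>z. \<Sum>k<length fs. (c k + d k) * (fs ! k) z)"
      by (simp add: fun_eq_iff distrib_right sum.distrib)
    then show "x + y \<in> {\<lambda>z. \<Sum>k<length fs. c k * (fs ! k) z |c. True}"
      by (intro CollectI exI[of _ "\<lambda>k. c k + d k"]) simp
  next
    fix a x assume "x \<in> {\<lambda>z. \<Sum>k<length fs. c k * (fs ! k) z |c. True}"
    then obtain c where "x = (\<lambda>z. \<Sum>k<length fs. c k * (fs ! k) z)" by blast
    then have "(\<lambda>z. a * x z) = (\<lambda>z. \<Sum>k<length fs. (a * c k) * (fs ! k) z)"
      by (simp add: sum_distrib_left mult.assoc)
    then show "(\<lambda>z. a * x z) \<in> {\<lambda>z. \<Sum>k<length fs. c k * (fs ! k) z |c. True}"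
      by (intro CollectI exI[of _ "\<lambda>k. a * c k"]) simp
  qed
  moreover have "fs ! j \<in> cspan fs" if "j < length fs" for j
  proof -
    have "fs ! j = (\<lambda>z. \<Sum>k<length fs. (if k = j then 1 else 0) * (fs ! k) z)"
      using that by (simp add: mult_if_delta)
    then show ?thesis unfolding cspan_def by (intro CollectI exI[of _ "\<lambda>k. if k = j then 1 else 0"]) simp
  qed
  ultimately show "cfun.span (set fs) \<subseteq> cspan fs"
    by (intro cfun.span_minimal) (auto simp: in_set_conv_nth)
qed

lemma H2_regular_span:
  assumes "\<And>f. f \<in> S \<Longrightarrow> H2_regular f" "g \<in> cfun.span S"
  shows "H2_regular g"
proof -
  have "cfun.subspace {f. H2_regular f}"
    unfolding cfun.subspace_def
    using H2_regular_zero H2_regular_add H2_regular_scale by (auto simp: zero_fun_def plus_fun_def)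
  then show ?thesis using cfun.span_induct[OF assms(2)] assms(1) by blast
qed

definition H2_definite_on :: "(complex \<Rightarrow> complex) set \<Rightarrow> bool" where
  "H2_definite_on X \<longleftrightarrow> (\<forall>g\<in>X. H2_inner g g = 0 \<longrightarrow> g = 0)"

definition H2_orthonormal :: "(complex \<Rightarrow> complex) list \<Rightarrow> bool" where
  "H2_orthonormal bs \<longleftrightarrow>
     (\<forall>i<length bs. \<forall>j<length bs. H2_inner (bs ! i) (bs ! j) = (if i = j then 1 else 0))"

lemma is_onb_iff: "is_onb X bs \<longleftrightarrow> set bs \<subseteq> X \<and> X \<subseteq> cspan bs \<and> H2_orthonormal bs"
  unfolding is_onb_def H2_orthonormal_def ..

lemma H2_inner_orthonormal_lincomb_right:
  assumes "H2_orthonormal bs" "\<And>b. b \<in> set bs \<Longrightarrow> H2_regular b" "j < length bs"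
  shows "H2_inner (bs ! j) (\<lambda>z. \<Sum>i<length bs. c i * (bs ! i) z) = c j"
proof -
  have "H2_inner (bs ! j) (\<lambda>z. \<Sum>i<length bs. c i * (bs ! i) z)
      = (\<Sum>i<length bs. c i * H2_inner (bs ! j) (bs ! i))"
    using assms by (intro H2_inner_lincomb_right) auto
  also have "\<dots> = (\<Sum>i<length bs. if i = j then c i else 0)"
    using assms(1,3) unfolding H2_orthonormal_def by (intro sum.cong) auto
  finally show ?thesis using assms(3) by simp
qed

lemma H2_inner_orthonormal_lincomb:
  assumes "H2_orthonormal bs" "\<And>b. b \<in> set bs \<Longrightarrow> H2_regular b"
  shows "H2_inner (\<lambda>z. \<Sum>i<length bs. a i * (bs ! i) z) (\<lambda>z. \<Sum>i<length bs. c i * (bs ! i) z)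
       = (\<Sum>i<length bs. cnj (a i) * c i)"
  using assms
  by (subst H2_inner_lincomb_left) (auto intro: H2_regular_lincomb simp: H2_inner_orthonormal_lincomb_right)

lemma H2_inner_orthonormal_residual:
  assumes bs: "H2_orthonormal bs" "\<And>b. b \<in> set bs \<Longrightarrow> H2_regular b" and f: "H2_regular f"
    and "j < length bs"
  shows "H2_inner (bs ! j) (\<lambda>z. f z - (\<Sum>i<length bs. H2_inner (bs ! i) f * (bs ! i) z)) = 0"
proof -
  have "H2_regular (\<lambda>z. \<Sum>i<length bs. H2_inner (bs ! i) f * (bs ! i) z)"
    using bs by (intro H2_regular_lincomb) auto
  then show ?thesis
    using assms H2_inner_orthonormal_lincomb_right[OF bs] by (simp add: H2_inner_diff_right)
qed

lemma H2_orthonormal_snoc: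
  assumes "H2_orthonormal bs" "\<And>j. j < length bs \<Longrightarrow> H2_inner (bs ! j) b = 0" "H2_inner b b = 1"
  shows "H2_orthonormal (bs @ [b])"
proof -
  have "H2_inner b (bs ! j) = 0" if "j < length bs" for j
    using assms(2)[OF that] H2_inner_commute[of b "bs ! j"] by simp
  with assms show ?thesis unfolding H2_orthonormal_def by (auto simp: nth_append)
qed

lemma H2_inner_normalize:
  assumes "\<rho> > 0" "\<rho> * \<rho> = H2_sqnorm r"
  shows "H2_inner (\<lambda>z. of_real (1 / \<rho>) * r z) (\<lambda>z. of_real (1 / \<rho>) * r z) = 1"
  unfolding H2_inner_scale_left H2_inner_scale_right H2_inner_self assms(2)[symmetric]
  using assms(1) by simp

lemma span_insert_scaled_residual:
  assumes "P \<in> cfun.span S" "c \<noteq> 0"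
  shows "cfun.span (insert (\<lambda>z. c * (f z - P z)) S) = cfun.span (insert f S)"
proof -
  define b where "b = (\<lambda>z. c * (f z - P z))"
  have "f = P + (\<lambda>z. (1 / c) * b z)" using assms(2) by (simp add: b_def fun_eq_iff)
  moreover have "P \<in> cfun.span (insert b S)" using assms(1) cfun.span_mono[of S "insert b S"] by auto
  moreover have "(\<lambda>z. (1 / c) * b z) \<in> cfun.span (insert b S)"
    by (intro cfun.span_scale cfun.span_base) simp
  ultimately have "f \<in> cfun.span (insert b S)" by (simp add: cfun.span_add)
  have "P \<in> cfun.span (insert f S)" using assms(1) cfun.span_mono[of S "insert f S"] by auto
  then have "f - P \<in> cfun.span (insert f S)" using cfun.span_diff[OF cfun.span_base[of f]] by simp
  then have "b \<in> cfun.span (insert f S)" using cfun.span_scale[of "f - P" _ c] by (simp add: b_def)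
  with \<open>f \<in> cfun.span (insert b S)\<close> show ?thesis unfolding b_def[symmetric] cfun.span_eq
    by (auto intro: cfun.span_base cfun.span_mono[THEN subsetD, rotated])
qed

lemma H2_orthonormal_extend:
  assumes bs: "H2_orthonormal bs" "\<And>b. b \<in> set bs \<Longrightarrow> H2_regular b" and f: "H2_regular f"
    and definite: "H2_definite_on (cfun.span (insert f (set bs)))"
  obtains bs' where "H2_orthonormal bs'" "cfun.span (set bs') = cfun.span (insert f (set bs))"
proof -
  define P where "P = (\<lambda>z. \<Sum>i<length bs. H2_inner (bs ! i) f * (bs ! i) z)"
  define r where "r = (\<lambda>z. f z - P z)"
  have P_span: "P \<in> cfun.span (set bs)"
    unfolding P_def by (intro lincomb_in_span cfun.span_base) auto
  then have "P \<in> cfun.span (insert f (set bs))"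
    using cfun.span_mono[of "set bs" "insert f (set bs)"] by auto
  then have "f - P \<in> cfun.span (insert f (set bs))"
    using cfun.span_diff[OF cfun.span_base[of f]] by simp
  then have r_span: "r \<in> cfun.span (insert f (set bs))" by (simp add: r_def fun_diff_def)
  show ?thesis
  proof (cases "H2_inner r r = 0")
    case True
    then have "r = 0" using definite r_span unfolding H2_definite_on_def by blast
    then have "f = P" by (simp add: r_def fun_eq_iff)
    then have "cfun.span (insert f (set bs)) = cfun.span (set bs)"
      using P_span by (simp add: cfun.span_redundant)
    with that[OF bs(1)] show ?thesis by simp
  next
    case False
    define \<rho> where "\<rho> = sqrt (H2_sqnorm r)"
    define b where "b = (\<lambda>z. of_real (1 / \<rho>) * r z)"
    have "H2_sqnorm r > 0" using False H2_sqnorm_nonneg[of r] by (simp add: H2_inner_self)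
    then have "\<rho> > 0" "\<rho> * \<rho> = H2_sqnorm r" unfolding \<rho>_def by auto
    then have "H2_inner b b = 1" unfolding b_def by (rule H2_inner_normalize)
    moreover have "H2_inner (bs ! j) b = 0" if "j < length bs" for j
      using H2_inner_orthonormal_residual[OF bs f that]
      unfolding b_def H2_inner_scale_right r_def P_def by simp
    ultimately have "H2_orthonormal (bs @ [b])" using bs(1) by (intro H2_orthonormal_snoc) auto
    moreover have "cfun.span (set (bs @ [b])) = cfun.span (insert f (set bs))"
      using span_insert_scaled_residual[OF P_span, of "of_real (1 / \<rho>)" f] \<open>\<rho> > 0\<close>
      by (simp add: b_def r_def)
    ultimately show ?thesis by (rule that)
  qed
qed

lemma H2_orthonormal_basis_exists:
  assumes "finite S" "\<And>f. f \<in> S \<Longrightarrow> H2_regular f" "H2_definite_on (cfun.span S)"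
  shows "\<exists>bs. H2_orthonormal bs \<and> cfun.span (set bs) = cfun.span S"
  using assms
proof (induction S rule: finite_induct)
  case empty
  show ?case by (intro exI[of _ "[]"]) (simp add: H2_orthonormal_def)
next
  case (insert f F)
  have "H2_definite_on (cfun.span F)"
    using insert.prems(2) cfun.span_mono[of F "insert f F"] unfolding H2_definite_on_def by blast
  with insert obtain bs where bs: "H2_orthonormal bs" "cfun.span (set bs) = cfun.span F" by auto
  have span_eq: "cfun.span (insert f (set bs)) = cfun.span (insert f F)"
    using bs(2) by (simp add: cfun.span_insert)
  have "H2_regular b" if "b \<in> set bs" for b
    using that bs(2) insert.prems(1) cfun.span_base[of b "set bs"] by (auto intro: H2_regular_span)
  with bs(1) insert.prems span_eq obtain bs' where
    "H2_orthonormal bs'" "cfun.span (set bs') = cfun.span (insert f (set bs))"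
    by (metis H2_orthonormal_extend insertI1)
  with span_eq show ?case by auto
qed

lemma exists_is_onb_cspan:
  assumes "\<And>f. f \<in> set fs \<Longrightarrow> H2_regular f" "H2_definite_on (cspan fs)"
  shows "\<exists>bs. is_onb (cspan fs) bs"
proof -
  obtain bs where "H2_orthonormal bs" "cfun.span (set bs) = cfun.span (set fs)"
    using H2_orthonormal_basis_exists[of "set fs"] assms unfolding cspan_eq_span by auto
  then show ?thesis unfolding is_onb_iff cspan_eq_span by (auto intro: cfun.span_base)
qed

lemma sum_fun_lambda: "(\<Sum>k\<in>A. (\<lambda>z. f k z)) = (\<lambda>z. \<Sum>k\<in>A. f k z)"
  by (induction A rule: infinite_finite_induct) (auto simp: fun_eq_iff plus_fun_def zero_fun_def)

lemma independent_set_of_distinct_list: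
  assumes "distinct L"
    and coeffs: "\<And>c. (\<lambda>z. \<Sum>k<length L. c k * (L ! k) z) = 0 \<Longrightarrow> \<forall>k<length L. c k = 0"
  shows "cfun.independent (set L)"
  unfolding cfun.dependent_finite[OF finite_set]
proof clarify
  fix u v assume zero: "(\<Sum>v\<in>set L. (\<lambda>z. u v * v z)) = 0" and v: "v \<in> set L" "u v \<noteq> 0"
  have "(\<Sum>k<length L. u (L ! k) * (L ! k) z) = (\<Sum>v\<in>set L. u v * v z)" for z
    using sum.reindex_bij_betw[OF bij_betw_nth[OF assms(1) refl refl], of "\<lambda>v. u v * v z"]
    by (simp add: lessThan_atLeast0)
  with zero have "\<forall>k<length L. u (L ! k) = 0" by (intro coeffs) (simp add: sum_fun_lambda fun_eq_iff)
  with v show False by (auto simp: in_set_conv_nth)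
qed

lemma H2_orthonormal_independent:
  assumes "H2_orthonormal bs" "\<And>b. b \<in> set bs \<Longrightarrow> H2_regular b"
  shows "distinct bs" "cfun.independent (set bs)"
proof -
  show "distinct bs"
    using assms(1) unfolding H2_orthonormal_def distinct_conv_nth by (metis one_neq_zero)
  moreover have "\<forall>k<length bs. c k = 0" if "(\<lambda>z. \<Sum>k<length bs. c k * (bs ! k) z) = 0" for c
  proof (intro allI impI)
    fix k assume "k < length bs"
    then have "c k = H2_inner (bs ! k) (\<lambda>z. \<Sum>k<length bs. c k * (bs ! k) z)"
      using H2_inner_orthonormal_lincomb_right[OF assms] by simp
    then show "c k = 0" using arg_cong[OF that, of "H2_inner (bs ! k)"] by (simp add: H2_inner_def)
  qed
  ultimately show "cfun.independent (set bs)" by (rule independent_set_of_distinct_list)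
qed

section \<open>Partial fractions with poles off the imaginary axis\<close>

lemma vanishing_on_imaginary_axis_imp_vanishing:
  fixes F :: "complex \<Rightarrow> complex"
  assumes Q: "finite Q" "\<And>q. q \<in> Q \<Longrightarrow> Re q \<noteq> 0" and holo: "F holomorphic_on - Q"
    and axis: "\<And>\<omega>::real. F (\<i> * of_real \<omega>) = 0" and "z \<notin> Q"
  shows "F z = 0"
proof -
  define U where "U = range (\<lambda>\<omega>::real. \<i> * of_real \<omega>)"
  have "U \<subseteq> - Q"
    unfolding U_def using Q(2) by force
  moreover have "0 \<in> - Q" using Q(2) by force
  moreover have "0 islimpt U"
    unfolding islimpt_approachable
  proof (intro allI impI)
    fix e :: real assume "e > 0"
    moreover have "\<i> * of_real (e / 2) \<in> U" unfolding U_def by (rule rangeI)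
    ultimately show "\<exists>x'\<in>U. x' \<noteq> 0 \<and> dist x' 0 < e"
      by (intro bexI[of _ "\<i> * of_real (e / 2)"]) (auto simp: norm_mult)
  qed
  moreover have "open (- Q)" using Q(1) by (simp add: finite_imp_closed open_Compl)
  moreover have "connected (- Q)"
    using connected_open_diff_countable[of UNIV Q] Q(1)
    by (simp add: Compl_eq_Diff_UNIV countable_finite connected_UNIV)
  ultimately show ?thesis
    using analytic_continuation[OF holo, of U 0 z] axis \<open>z \<notin> Q\<close> unfolding U_def by blast
qed

lemma isCont_eventually_eq_const:
  fixes G :: "'a::{perfect_space,t2_space} \<Rightarrow> 'b::t2_space"
  assumes "isCont G a" "eventually (\<lambda>z. G z = c) (at a)"
  shows "G a = c"
proof -
  have "(G \<longlongrightarrow> c) (at a)" using assms(2) by (rule tendsto_eventually)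
  with tendsto_unique[OF trivial_limit_at assms(1)[unfolded continuous_at]] show ?thesis .
qed

lemma partial_fraction_coeffs_eq_0:
  fixes q c d :: "nat \<Rightarrow> complex"
  assumes inj: "inj_on q {..<n}" and "j < n"
    and zero: "\<And>z. z \<notin> q ` {..<n} \<Longrightarrow> (\<Sum>k<n. c k / (z - q k) + d k / (z - q k)\<^sup>2) = 0"
  shows "c j = 0 \<and> d j = 0"
proof -
  define R where "R z = (\<Sum>k\<in>{..<n} - {j}. c k / (z - q k) + d k / (z - q k)\<^sup>2)" for z
  have cont_R: "isCont R (q j)"
    unfolding R_def using inj \<open>j < n\<close> by (intro continuous_intros) (auto dest: inj_onD)
  have avoid: "eventually (\<lambda>z. z \<notin> q ` {..<n}) (at (q j))"
    using islimpt_finite[of "q ` {..<n}" "q j"] islimpt_iff_eventually by blast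
  have split: "c j / (z - q j) + d j / (z - q j)\<^sup>2 + R z = 0" if "z \<notin> q ` {..<n}" for z
    using zero[OF that] sum.remove[of "{..<n}" j "\<lambda>k. c k / (z - q k) + d k / (z - q k)\<^sup>2"] \<open>j < n\<close>
    by (simp add: R_def)
  have ev_d: "eventually (\<lambda>z. c j * (z - q j) + d j + (z - q j)\<^sup>2 * R z = 0) (at (q j))"
  proof (rule eventually_mono[OF avoid])
    fix z assume z: "z \<notin> q ` {..<n}"
    then have "z - q j \<noteq> 0" using \<open>j < n\<close> by auto
    then have "(z - q j)\<^sup>2 * (c j / (z - q j) + d j / (z - q j)\<^sup>2 + R z)
        = c j * (z - q j) + d j + (z - q j)\<^sup>2 * R z"
      by (simp add: distrib_left power2_eq_square)
    then show "c j * (z - q j) + d j + (z - q j)\<^sup>2 * R z = 0" using split[OF z] by simp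
  qed
  have "isCont (\<lambda>z. c j * (z - q j) + d j + (z - q j)\<^sup>2 * R z) (q j)"
    by (intro continuous_intros cont_R)
  from isCont_eventually_eq_const[OF this ev_d] have d: "d j = 0" by simp
  have ev_c: "eventually (\<lambda>z. c j + (z - q j) * R z = 0) (at (q j))"
  proof (rule eventually_mono[OF avoid])
    fix z assume z: "z \<notin> q ` {..<n}"
    then have "z - q j \<noteq> 0" using \<open>j < n\<close> by auto
    then have "(z - q j) * (c j / (z - q j) + d j / (z - q j)\<^sup>2 + R z) = c j + (z - q j) * R z"
      using d by (simp add: distrib_left)
    then show "c j + (z - q j) * R z = 0" using split[OF z] by simp
  qed
  have "isCont (\<lambda>z. c j + (z - q j) * R z) (q j)"
    by (intro continuous_intros cont_R)
  from isCont_eventually_eq_const[OF this ev_c] have "c j = 0" by simp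
  with d show ?thesis by simp
qed

lemma partial_fraction_vanishing_on_imaginary_axis:
  fixes q c d :: "nat \<Rightarrow> complex"
  assumes "inj_on q {..<n}" "\<And>k. k < n \<Longrightarrow> Re (q k) \<noteq> 0"
    and "\<And>\<omega>::real. (\<Sum>k<n. c k / (\<i> * of_real \<omega> - q k) + d k / (\<i> * of_real \<omega> - q k)\<^sup>2) = 0"
    and "j < n"
  shows "c j = 0 \<and> d j = 0"
proof (rule partial_fraction_coeffs_eq_0[OF assms(1,4)])
  fix z assume z: "z \<notin> q ` {..<n}"
  have holo: "(\<lambda>z. \<Sum>k<n. c k / (z - q k) + d k / (z - q k)\<^sup>2) holomorphic_on - q ` {..<n}"
    by (intro holomorphic_intros) auto
  show "(\<Sum>k<n. c k / (z - q k) + d k / (z - q k)\<^sup>2) = 0"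
    by (rule vanishing_on_imaginary_axis_imp_vanishing[OF _ _ holo _ z]) (use assms(2,3) in auto)
qed

definition axis_independent :: "(complex \<Rightarrow> complex) list \<Rightarrow> bool" where
  "axis_independent fs \<longleftrightarrow> (\<forall>c. (\<forall>\<omega>::real. (\<Sum>k<length fs. c k * (fs ! k) (\<i> * of_real \<omega>)) = 0)
     \<longrightarrow> (\<forall>k<length fs. c k = 0))"

lemma H2_definite_on_cspan:
  assumes "\<And>f. f \<in> set fs \<Longrightarrow> H2_regular f" "axis_independent fs"
  shows "H2_definite_on (cspan fs)"
  unfolding H2_definite_on_def
proof (intro ballI impI)
  fix g assume g: "g \<in> cspan fs" "H2_inner g g = 0"
  then obtain c where c: "g = (\<lambda>z. \<Sum>k<length fs. c k * (fs ! k) z)" unfolding cspan_def by blast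
  have "H2_regular g" using assms(1) g(1) unfolding cspan_eq_span by (rule H2_regular_span)
  moreover have "H2_sqnorm g = 0" using g(2) by (simp add: H2_inner_self)
  ultimately have "g (\<i> * of_real \<omega>) = 0" for \<omega> by (rule H2_sqnorm_eq_0_imp)
  then have "\<forall>k<length fs. c k = 0" using assms(2) unfolding axis_independent_def c by simp
  then show "g = 0" unfolding c by (simp add: fun_eq_iff)
qed

lemma axis_independent_imp_independent:
  assumes "axis_independent fs"
  shows "distinct fs" "cfun.independent (set fs)"
proof -
  show "distinct fs"
    unfolding distinct_conv_nth
  proof (intro allI impI notI)
    fix i j assume ij: "i < length fs" "j < length fs" "i \<noteq> j" "fs ! i = fs ! j"
    define c :: "nat \<Rightarrow> complex" where "c k = (if k = i then 1 else 0) - (if k = j then 1 else 0)" for k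
    have "(\<Sum>k<length fs. c k * (fs ! k) z) = (fs ! i) z - (fs ! j) z" for z
      using ij(1,2) by (simp add: c_def left_diff_distrib sum_subtractf mult_if_delta)
    then have "c i = 0" using assms ij unfolding axis_independent_def by simp
    with ij(3) show False by (simp add: c_def)
  qed
  moreover have "\<forall>k<length fs. c k = 0" if "(\<lambda>z. \<Sum>k<length fs. c k * (fs ! k) z) = 0" for c
    using assms fun_cong[OF that] unfolding axis_independent_def by simp
  ultimately show "cfun.independent (set fs)" by (rule independent_set_of_distinct_list)
qed

definition Tbasis :: "complex list \<Rightarrow> (complex \<Rightarrow> complex) list" where
  "Tbasis ls = concat (map (\<lambda>l. [vfun (- cnj l), vfun' (- cnj l)]) ls)"

lemma Tspace_eq_cspan: "Tspace ls = cspan (Tbasis ls)"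
  unfolding Tspace_def Tbasis_def ..

lemma length_Tbasis: "length (Tbasis ls) = 2 * length ls"
  unfolding Tbasis_def by (induction ls) auto

lemma set_Tbasis: "set (Tbasis ls) = (\<lambda>l. vfun (- cnj l)) ` set ls \<union> (\<lambda>l. vfun' (- cnj l)) ` set ls"
  unfolding Tbasis_def by auto

lemma Tbasis_nth:
  "j < length ls \<Longrightarrow>
    Tbasis ls ! (2 * j) = vfun (- cnj (ls ! j)) \<and> Tbasis ls ! (2 * j + 1) = vfun' (- cnj (ls ! j))"
proof (induction ls arbitrary: j)
  case (Cons l ls)
  have T: "Tbasis (l # ls) = vfun (- cnj l) # vfun' (- cnj l) # Tbasis ls" by (simp add: Tbasis_def)
  show ?case
  proof (cases j)
    case (Suc i)
    with Cons.prems Cons.IH[of i] show ?thesis by (simp add: T)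
  qed (simp add: T)
qed simp

lemma lincomb_Tbasis:
  "(\<Sum>k<length (Tbasis ls). c k * (Tbasis ls ! k) z)
     = (\<Sum>j<length ls. c (2 * j) / (z - ls ! j) + (- c (2 * j + 1)) / (z - ls ! j)\<^sup>2)"
proof -
  have pairs: "(\<Sum>k<2 * n. h k) = (\<Sum>j<n. h (2 * j) + h (2 * j + 1))" for n and h :: "nat \<Rightarrow> complex"
    by (induction n) (simp_all add: algebra_simps)
  have "(\<Sum>k<length (Tbasis ls). c k * (Tbasis ls ! k) z)
      = (\<Sum>j<length ls. c (2 * j) * (Tbasis ls ! (2 * j)) z + c (2 * j + 1) * (Tbasis ls ! (2 * j + 1)) z)"
    unfolding length_Tbasis by (rule pairs)
  also have "\<dots> = (\<Sum>j<length ls. c (2 * j) / (z - ls ! j) + (- c (2 * j + 1)) / (z - ls ! j)\<^sup>2)"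
    by (intro sum.cong) (simp_all add: Tbasis_nth[simplified] vfun_def vfun'_def)
  finally show ?thesis .
qed

lemma H2_regular_Tbasis:
  "(\<And>l. l \<in> set ls \<Longrightarrow> Re l \<noteq> 0) \<Longrightarrow> f \<in> set (Tbasis ls) \<Longrightarrow> H2_regular f"
  unfolding set_Tbasis by (auto intro!: H2_regular_vfun H2_regular_vfun')

lemma axis_independent_Tbasis:
  assumes "distinct ls" "\<And>l. l \<in> set ls \<Longrightarrow> Re l \<noteq> 0"
  shows "axis_independent (Tbasis ls)"
  unfolding axis_independent_def
proof (intro allI impI)
  fix c k assume vanish: "\<forall>\<omega>::real. (\<Sum>k<length (Tbasis ls). c k * (Tbasis ls ! k) (\<i> * of_real \<omega>)) = 0"
    and k: "k < length (Tbasis ls)"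
  have c: "c (2 * j) = 0 \<and> - c (2 * j + 1) = 0" if "j < length ls" for j
  proof (rule partial_fraction_vanishing_on_imaginary_axis[where q = "\<lambda>j. ls ! j"
        and c = "\<lambda>j. c (2 * j)" and d = "\<lambda>j. - c (2 * j + 1)", OF _ _ _ that])
    show "inj_on (\<lambda>j. ls ! j) {..<length ls}" using assms(1) by (simp add: inj_on_nth)
  qed (use assms(2) vanish in \<open>auto simp: lincomb_Tbasis\<close>)
  define j where "j = k div 2"
  have "j < length ls" using k by (simp add: j_def length_Tbasis)
  with c have "c (2 * j) = 0" "c (2 * j + 1) = 0" by auto
  moreover have "k = 2 * j \<or> k = 2 * j + 1" unfolding j_def by presburger
  ultimately show "c k = 0" by auto
qed

lemma H2_regular_Vbasis:
  "(\<And>\<mu>. \<mu> \<in> set mus \<Longrightarrow> Re \<mu> \<noteq> 0) \<Longrightarrow> f \<in> set (map vfun mus) \<Longrightarrow> H2_regular f"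
  by (auto intro!: H2_regular_vfun)

lemma axis_independent_Vbasis:
  assumes "distinct mus" "\<And>\<mu>. \<mu> \<in> set mus \<Longrightarrow> Re \<mu> \<noteq> 0"
  shows "axis_independent (map vfun mus)"
  unfolding axis_independent_def
proof (intro allI impI)
  fix c k assume vanish: "\<forall>\<omega>::real. (\<Sum>k<length (map vfun mus). c k * (map vfun mus ! k) (\<i> * of_real \<omega>)) = 0"
    and k: "k < length (map vfun mus)"
  show "c k = 0"
  proof (rule partial_fraction_vanishing_on_imaginary_axis[where q = "\<lambda>k. - cnj (mus ! k)"
        and c = c and d = "\<lambda>k. 0" and j = k, THEN conjunct1])
    show "inj_on (\<lambda>k. - cnj (mus ! k)) {..<length mus}"
      using assms(1) by (auto intro!: inj_onI simp: nth_eq_iff_index_eq)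
  qed (use assms(2) vanish k in \<open>auto simp: vfun_def\<close>)
qed

section \<open>Approximating the generators of T by V\<close>

lemma norm_imag_axis_minus_ge: "- Re a \<le> cmod (\<i> * of_real \<omega> - a)"
  using abs_Re_le_cmod[of "\<i> * of_real \<omega> - a"] by simp

lemma simple_pole_difference_bound:
  fixes z a l :: complex
  assumes "\<rho> \<le> cmod (z - a)" "0 < \<rho>" "cmod (a - l) \<le> \<epsilon>"
  shows "cmod (1 / (z - l) - 1 / (z - a)) * cmod (z - l) \<le> \<epsilon> / \<rho>"
proof (cases "z = l")
  case False
  have "z \<noteq> a" using assms(1,2) by auto
  have "(1 / u - 1 / v) * u = (v - u) / v" if "u \<noteq> 0" "v \<noteq> 0" for u v :: complex
    using that by (simp add: field_simps)
  from this[of "z - l" "z - a"] False \<open>z \<noteq> a\<close>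
  have "(1 / (z - l) - 1 / (z - a)) * (z - l) = (l - a) / (z - a)" by simp
  then have "cmod (1 / (z - l) - 1 / (z - a)) * cmod (z - l) = cmod (l - a) / cmod (z - a)"
    by (simp only: norm_mult[symmetric] norm_divide[symmetric])
  also have "\<dots> = cmod (a - l) / cmod (z - a)" by (simp add: norm_minus_commute)
  also have "\<dots> \<le> \<epsilon> / \<rho>"
    using assms order_trans[OF norm_ge_zero assms(3)] by (intro frac_le) auto
  finally show ?thesis .
qed (use assms order_trans[OF norm_ge_zero assms(3)] in simp)

lemma double_pole_difference_bound:
  fixes z a1 a2 l :: complex
  assumes "\<rho> \<le> cmod (z - a1)" "\<rho> \<le> cmod (z - a2)" "\<rho> \<le> cmod (z - l)" "0 < \<rho>" "a1 \<noteq> a2"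
    and "cmod (a1 - l) \<le> \<epsilon>" "cmod (a2 - l) \<le> \<epsilon>"
  shows "cmod (- 1 / (z - l)\<^sup>2 - (1 / (z - a2) - 1 / (z - a1)) / (a1 - a2)) * cmod (z - l)
    \<le> 2 * \<epsilon> / \<rho>\<^sup>2"
proof -
  have nz: "z - a1 \<noteq> 0" "z - a2 \<noteq> 0" "z - l \<noteq> 0" "a1 - a2 \<noteq> 0" using assms(1-5) by auto
  have "(- 1 / s\<^sup>2 - (1 / y - 1 / x) / (y - x)) * s = (s - y) / (x * y) + (s - x) / (x * s)"
    if "x \<noteq> 0" "y \<noteq> 0" "s \<noteq> 0" "y - x \<noteq> 0" for x y s :: complex
    using that by (simp add: field_simps power2_eq_square)
  from this[of "z - a1" "z - a2" "z - l"] nz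
  have "cmod (- 1 / (z - l)\<^sup>2 - (1 / (z - a2) - 1 / (z - a1)) / (a1 - a2)) * cmod (z - l)
      = cmod ((a2 - l) / ((z - a1) * (z - a2)) + (a1 - l) / ((z - a1) * (z - l)))"
    by (simp add: norm_mult[symmetric])
  also have "\<dots> \<le> cmod (a2 - l) / (cmod (z - a1) * cmod (z - a2)) + cmod (a1 - l) / (cmod (z - a1) * cmod (z - l))"
    using norm_triangle_ineq[of "(a2 - l) / ((z - a1) * (z - a2))" "(a1 - l) / ((z - a1) * (z - l))"]
    by (simp add: norm_divide norm_mult)
  also have "\<dots> \<le> \<epsilon> / (\<rho> * \<rho>) + \<epsilon> / (\<rho> * \<rho>)"
    using assms order_trans[OF norm_ge_zero assms(6)] by (intro add_mono frac_le mult_mono) auto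
  finally show ?thesis by (simp add: power2_eq_square)
qed

lemma power2_le_of_mult_le:
  fixes x d B c :: real
  assumes "0 \<le> x" "0 < d" "x * d \<le> B" "1 / d\<^sup>2 \<le> c"
  shows "x\<^sup>2 \<le> B\<^sup>2 * c"
proof -
  have "x \<le> B / d" using assms(2,3) by (simp add: field_simps)
  then have "x\<^sup>2 \<le> (B / d)\<^sup>2" using assms(1) by (simp add: power_mono)
  also have "\<dots> = B\<^sup>2 * (1 / d\<^sup>2)" by (simp add: power_divide)
  also have "\<dots> \<le> B\<^sup>2 * c" using assms(4) by (intro mult_left_mono) auto
  finally show ?thesis .
qed

definition generator_weight :: "complex \<Rightarrow> real" where
  "generator_weight l = pole_weight l / (- Re l / 2)\<^sup>2 + 4 * pole_weight l / (- Re l / 2)^4"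

lemma generator_weight_nonneg: "generator_weight l \<ge> 0"
  unfolding generator_weight_def using pole_weight_pos[of l] by simp

lemma cmod_neg_cnj_minus: "cmod (- cnj \<mu> - l) = cmod (\<mu> + cnj l)"
proof -
  have "- cnj \<mu> - l = - cnj (\<mu> + cnj l)" by simp
  then show ?thesis by (simp only: norm_minus_cancel complex_mod_cnj)
qed

lemma norm_imag_axis_minus_ge_half:
  assumes "cmod (a - l) \<le> - Re l / 2"
  shows "- Re l / 2 \<le> cmod (\<i> * of_real \<omega> - a)"
proof -
  have "Re (a - l) \<le> - Re l / 2" using abs_ge_self[of "Re (a - l)"] abs_Re_le_cmod[of "a - l"] assms
    by linarith
  then show ?thesis using norm_imag_axis_minus_ge[of a \<omega>] by simp
qed

lemma vfun_approx:
  assumes "Re l < 0" "\<epsilon> \<le> - Re l / 2" "cmod (\<mu> + cnj l) \<le> \<epsilon>"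
  shows "(cmod (vfun (- cnj l) (\<i> * of_real \<omega>) - vfun \<mu> (\<i> * of_real \<omega>)))\<^sup>2
    \<le> generator_weight l * \<epsilon>\<^sup>2 / (1 + \<omega>\<^sup>2)"
proof -
  define \<rho> z a where "\<rho> = - Re l / 2" and "z = \<i> * complex_of_real \<omega>" and "a = - cnj \<mu>"
  have "\<rho> > 0" "cmod (a - l) \<le> \<epsilon>" using assms by (simp_all add: \<rho>_def a_def cmod_neg_cnj_minus)
  then have "\<rho> \<le> cmod (z - a)" using assms(2) norm_imag_axis_minus_ge_half[of a l \<omega>]
    unfolding \<rho>_def z_def by linarith
  have "(cmod (1 / (z - l) - 1 / (z - a)))\<^sup>2 \<le> (\<epsilon> / \<rho>)\<^sup>2 * (pole_weight l / (1 + \<omega>\<^sup>2))"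
    using simple_pole_difference_bound[OF \<open>\<rho> \<le> cmod (z - a)\<close> \<open>\<rho> > 0\<close> \<open>cmod (a - l) \<le> \<epsilon>\<close>]
      norm_imag_axis_minus_ge[of l \<omega>] inverse_power2_dist_le[of l \<omega>] assms(1) \<open>\<rho> > 0\<close>
    by (intro power2_le_of_mult_le[where d = "cmod (z - l)"]) (auto simp: z_def \<rho>_def)
  also have "\<dots> = pole_weight l / \<rho>\<^sup>2 * \<epsilon>\<^sup>2 / (1 + \<omega>\<^sup>2)" by (simp add: power_divide)
  also have "\<dots> \<le> generator_weight l * \<epsilon>\<^sup>2 / (1 + \<omega>\<^sup>2)"
    using pole_weight_pos[of l] unfolding generator_weight_def \<rho>_def
    by (intro divide_right_mono mult_right_mono) auto
  finally show ?thesis by (simp add: z_def a_def vfun_def)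
qed

lemma vfun'_approx:
  assumes "Re l < 0" "\<epsilon> \<le> - Re l / 2" "\<mu>1 \<noteq> \<mu>2" "cmod (\<mu>1 + cnj l) \<le> \<epsilon>" "cmod (\<mu>2 + cnj l) \<le> \<epsilon>"
  shows "(cmod (vfun' (- cnj l) (\<i> * of_real \<omega>)
      - (vfun \<mu>2 (\<i> * of_real \<omega>) - vfun \<mu>1 (\<i> * of_real \<omega>)) / (cnj \<mu>2 - cnj \<mu>1)))\<^sup>2
    \<le> generator_weight l * \<epsilon>\<^sup>2 / (1 + \<omega>\<^sup>2)"
proof -
  define \<rho> z a1 a2 where "\<rho> = - Re l / 2" and "z = \<i> * complex_of_real \<omega>"
    and "a1 = - cnj \<mu>1" and "a2 = - cnj \<mu>2"
  have "\<rho> > 0" "cmod (a1 - l) \<le> \<epsilon>" "cmod (a2 - l) \<le> \<epsilon>" "a1 \<noteq> a2"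
    using assms by (simp_all add: \<rho>_def a1_def a2_def cmod_neg_cnj_minus)
  moreover have "\<rho> \<le> cmod (z - a)" if "cmod (a - l) \<le> \<epsilon>" for a
    using that assms(2) norm_imag_axis_minus_ge_half[of a l \<omega>] unfolding \<rho>_def z_def by linarith
  moreover have "\<rho> \<le> cmod (z - l)"
    using norm_imag_axis_minus_ge[of l \<omega>] assms(1) unfolding \<rho>_def z_def by linarith
  ultimately have "cmod (- 1 / (z - l)\<^sup>2 - (1 / (z - a2) - 1 / (z - a1)) / (a1 - a2)) * cmod (z - l)
      \<le> 2 * \<epsilon> / \<rho>\<^sup>2"
    by (intro double_pole_difference_bound) auto
  then have "(cmod (- 1 / (z - l)\<^sup>2 - (1 / (z - a2) - 1 / (z - a1)) / (a1 - a2)))\<^sup>2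
      \<le> (2 * \<epsilon> / \<rho>\<^sup>2)\<^sup>2 * (pole_weight l / (1 + \<omega>\<^sup>2))"
    using inverse_power2_dist_le[of l \<omega>] norm_imag_axis_minus_ge[of l \<omega>] assms(1)
    by (intro power2_le_of_mult_le[where d = "cmod (z - l)"]) (auto simp: z_def)
  also have "\<dots> = 4 * pole_weight l / \<rho>^4 * \<epsilon>\<^sup>2 / (1 + \<omega>\<^sup>2)"
    by (simp add: power_divide power_mult_distrib power_mult[symmetric])
  also have "\<dots> \<le> generator_weight l * \<epsilon>\<^sup>2 / (1 + \<omega>\<^sup>2)"
    using pole_weight_pos[of l] unfolding generator_weight_def \<rho>_def
    by (intro divide_right_mono mult_right_mono) auto
  finally show ?thesis by (simp add: z_def a1_def a2_def vfun_def vfun'_def)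
qed

definition has_mirror_pairs :: "real \<Rightarrow> complex list \<Rightarrow> complex list \<Rightarrow> bool" where
  "has_mirror_pairs \<epsilon> ls mus \<longleftrightarrow> (\<forall>l\<in>set ls. \<exists>\<mu>1\<in>set mus. \<exists>\<mu>2\<in>set mus.
     \<mu>1 \<noteq> \<mu>2 \<and> cmod (\<mu>1 + cnj l) \<le> \<epsilon> \<and> cmod (\<mu>2 + cnj l) \<le> \<epsilon>)"

lemma vfun_in_Vspace: "\<mu> \<in> set mus \<Longrightarrow> vfun \<mu> \<in> Vspace mus"
  unfolding Vspace_def cspan_eq_span by (intro cfun.span_base) simp

lemma divided_difference_in_Vspace:
  assumes "\<mu>1 \<in> set mus" "\<mu>2 \<in> set mus"
  shows "(\<lambda>z. (vfun \<mu>2 z - vfun \<mu>1 z) / c) \<in> Vspace mus"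
proof -
  have "(\<lambda>z. (1 / c) * (vfun \<mu>2 - vfun \<mu>1) z) \<in> Vspace mus"
    using vfun_in_Vspace[OF assms(1)] vfun_in_Vspace[OF assms(2)] unfolding Vspace_def cspan_eq_span
    by (intro cfun.span_scale cfun.span_diff)
  then show ?thesis by simp
qed

lemma Tbasis_approx_in_Vspace:
  assumes "\<And>l. l \<in> set ls \<Longrightarrow> Re l < 0"
  obtains A where "A \<ge> 0"
    "\<And>\<epsilon> mus f. (\<And>l. l \<in> set ls \<Longrightarrow> \<epsilon> \<le> - Re l / 2) \<Longrightarrow> has_mirror_pairs \<epsilon> ls mus \<Longrightarrow>
      f \<in> set (Tbasis ls) \<Longrightarrow>
      \<exists>y\<in>Vspace mus. \<forall>\<omega>::real. (cmod (f (\<i> * of_real \<omega>) - y (\<i> * of_real \<omega>)))\<^sup>2 \<le> A * \<epsilon>\<^sup>2 / (1 + \<omega>\<^sup>2)"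
proof -
  define A where "A = (\<Sum>l\<in>set ls. generator_weight l)"
  show ?thesis
  proof (rule that[of A])
    show "A \<ge> 0" unfolding A_def by (intro sum_nonneg generator_weight_nonneg)
  next
    fix \<epsilon> mus f
    assume \<epsilon>: "\<And>l. l \<in> set ls \<Longrightarrow> \<epsilon> \<le> - Re l / 2" and pairs: "has_mirror_pairs \<epsilon> ls mus"
      and "f \<in> set (Tbasis ls)"
    then obtain l where l: "l \<in> set ls" "f = vfun (- cnj l) \<or> f = vfun' (- cnj l)"
      unfolding set_Tbasis by blast
    from pairs l(1) obtain \<mu>1 \<mu>2 where \<mu>: "\<mu>1 \<in> set mus" "\<mu>2 \<in> set mus" "\<mu>1 \<noteq> \<mu>2"
      "cmod (\<mu>1 + cnj l) \<le> \<epsilon>" "cmod (\<mu>2 + cnj l) \<le> \<epsilon>"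
      unfolding has_mirror_pairs_def by blast
    have weight_le: "generator_weight l * \<epsilon>\<^sup>2 / (1 + \<omega>\<^sup>2) \<le> A * \<epsilon>\<^sup>2 / (1 + \<omega>\<^sup>2)" for \<omega> :: real
      unfolding A_def using l(1) generator_weight_nonneg
      by (intro divide_right_mono mult_right_mono member_le_sum) auto
    from l(2) show "\<exists>y\<in>Vspace mus. \<forall>\<omega>::real.
        (cmod (f (\<i> * of_real \<omega>) - y (\<i> * of_real \<omega>)))\<^sup>2 \<le> A * \<epsilon>\<^sup>2 / (1 + \<omega>\<^sup>2)"
    proof
      assume "f = vfun (- cnj l)"
      then show ?thesis
        using vfun_in_Vspace[OF \<mu>(1)] order_trans[OF vfun_approx[OF assms[OF l(1)] \<epsilon>[OF l(1)] \<mu>(4)] weight_le]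
        by blast
    next
      assume "f = vfun' (- cnj l)"
      then show ?thesis
        using divided_difference_in_Vspace[OF \<mu>(1,2)] order_trans[OF vfun'_approx[OF assms[OF l(1)] \<epsilon>[OF l(1)] \<mu>(3-5)] weight_le]
        by (intro bexI[of _ "\<lambda>z. (vfun \<mu>2 z - vfun \<mu>1 z) / (cnj \<mu>2 - cnj \<mu>1)"]) auto
    qed
  qed
qed

section \<open>Principal angles\<close>

lemma cmat_eigenvalue_iff_eigenvalue:
  "cmat_eigenvalue m P e \<longleftrightarrow> eigenvalue (Matrix.mat m m (\<lambda>(i, j). P i j)) e"
proof
  assume "cmat_eigenvalue m P e"
  then obtain w where w: "\<exists>i<m. w i \<noteq> 0" "\<And>i. i < m \<Longrightarrow> (\<Sum>j<m. P i j * w j) = e * w i"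
    unfolding cmat_eigenvalue_def by blast
  have "Matrix.vec m w \<noteq> 0\<^sub>v m"
    using w(1) by (metis index_vec index_zero_vec(1))
  moreover have "Matrix.mat m m (\<lambda>(i, j). P i j) *\<^sub>v Matrix.vec m w = e \<cdot>\<^sub>v Matrix.vec m w"
    using w(2) by (intro eq_vecI) (auto simp: mult_mat_vec_def scalar_prod_def atLeast0LessThan)
  ultimately show "eigenvalue (Matrix.mat m m (\<lambda>(i, j). P i j)) e"
    unfolding eigenvalue_def eigenvector_def by (intro exI[of _ "Matrix.vec m w"]) auto
next
  assume "eigenvalue (Matrix.mat m m (\<lambda>(i, j). P i j)) e"
  then obtain v where v: "v \<in> carrier_vec m" "v \<noteq> 0\<^sub>v m"
    "Matrix.mat m m (\<lambda>(i, j). P i j) *\<^sub>v v = e \<cdot>\<^sub>v v"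
    unfolding eigenvalue_def eigenvector_def by auto
  have "\<exists>i<m. v $ i \<noteq> 0"
  proof (rule ccontr)
    assume "\<not> (\<exists>i<m. v $ i \<noteq> 0)"
    then have "v = 0\<^sub>v m" using v(1) by (intro eq_vecI) auto
    with v(2) show False by simp
  qed
  moreover have "(\<Sum>j<m. P i j * v $ j) = e * v $ i" if "i < m" for i
  proof -
    have "(\<Sum>j<m. P i j * v $ j) = (Matrix.mat m m (\<lambda>(i, j). P i j) *\<^sub>v v) $ i"
      using that v(1) by (simp add: mult_mat_vec_def scalar_prod_def atLeast0LessThan)
    also have "\<dots> = e * v $ i" unfolding v(3) using that v(1) by simp
    finally show ?thesis .
  qed
  ultimately show "cmat_eigenvalue m P e"
    unfolding cmat_eigenvalue_def by blast
qed

lemma cmat_eigenvalues_finite_nonempty: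
  assumes "m \<ge> 1"
  shows "finite {e. cmat_eigenvalue m P e}" "\<exists>e. cmat_eigenvalue m P e"
proof -
  define A where "A = Matrix.mat m m (\<lambda>(i, j). P i j)"
  have A: "A \<in> carrier_mat m m" unfolding A_def by simp
  have deg: "degree (char_poly A) = m" "coeff (char_poly A) m = 1"
    using degree_monic_char_poly[OF A] by auto
  have eq: "{e. cmat_eigenvalue m P e} = {e. poly (char_poly A) e = 0}"
    unfolding cmat_eigenvalue_iff_eigenvalue A_def[symmetric] using eigenvalue_root_char_poly[OF A] by auto
  show "finite {e. cmat_eigenvalue m P e}"
    unfolding eq using deg by (intro poly_roots_finite) auto
  have "\<not> constant (poly (char_poly A))" unfolding constant_degree using deg assms by simp
  then show "\<exists>e. cmat_eigenvalue m P e"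
    using fundamental_theorem_of_algebra eq by blast
qed

lemma gram_eigenvalue_eq:
  fixes M :: "nat \<Rightarrow> nat \<Rightarrow> complex"
  assumes "\<And>i. i < m \<Longrightarrow> (\<Sum>k<m. (\<Sum>j<n. M i j * cnj (M k j)) * v k) = e * v i"
  shows "e * of_real (\<Sum>i<m. (cmod (v i))\<^sup>2) = of_real (\<Sum>j<n. (cmod (\<Sum>i<m. cnj (v i) * M i j))\<^sup>2)"
proof -
  define b where "b j = (\<Sum>i<m. cnj (v i) * M i j)" for j
  have norm_v: "of_real (\<Sum>i<m. (cmod (v i))\<^sup>2) = (\<Sum>i<m. cnj (v i) * v i)"
    unfolding of_real_sum by (intro sum.cong refl) (simp only: cnj_mult_self)
  have "e * of_real (\<Sum>i<m. (cmod (v i))\<^sup>2) = (\<Sum>i<m. cnj (v i) * (e * v i))"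
    unfolding norm_v sum_distrib_left by (intro sum.cong refl) (simp only: mult_ac)
  also have "\<dots> = (\<Sum>i<m. cnj (v i) * (\<Sum>k<m. (\<Sum>j<n. M i j * cnj (M k j)) * v k))"
    by (intro sum.cong refl) (simp add: assms)
  also have "\<dots> = (\<Sum>i<m. \<Sum>k<m. \<Sum>j<n. (cnj (v i) * M i j) * (v k * cnj (M k j)))"
    by (intro sum.cong refl) (simp add: sum_distrib_left sum_distrib_right mult_ac)
  also have "\<dots> = (\<Sum>j<n. \<Sum>i<m. \<Sum>k<m. (cnj (v i) * M i j) * (v k * cnj (M k j)))"
    by (subst sum.swap) (rule sum.cong[OF refl], rule sum.swap)
  also have "\<dots> = (\<Sum>j<n. b j * cnj (b j))"
    by (intro sum.cong refl) (simp add: b_def sum_product cnj_sum)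
  also have "\<dots> = of_real (\<Sum>j<n. (cmod (b j))\<^sup>2)"
    by (simp only: of_real_sum complex_norm_square)
  finally show ?thesis unfolding b_def .
qed

lemma sin_arccos_Min_singular_values_le:
  fixes M :: "nat \<Rightarrow> nat \<Rightarrow> complex"
  assumes "1 \<le> m" "m \<le> n"
    and eig: "\<And>e. cmat_eigenvalue m (\<lambda>i k. \<Sum>j<n. M i j * cnj (M k j)) e \<Longrightarrow>
      e = of_real (Re e) \<and> 0 \<le> Re e \<and> 1 - bt \<le> Re e \<and> Re e \<le> 1"
  shows "sin (arccos (Min (singular_values m n M))) \<le> sqrt bt"
proof -
  define G where "G = (\<lambda>i k. \<Sum>j<n. M i j * cnj (M k j))"
  define SV where "SV = singular_values m n M"
  have SV: "SV = {\<sigma>. \<sigma> \<ge> 0 \<and> cmat_eigenvalue m G (of_real (\<sigma>\<^sup>2))}"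
    unfolding SV_def singular_values_def G_def using assms(2) by simp
  have "SV \<subseteq> (\<lambda>e. sqrt (Re e)) ` {e. cmat_eigenvalue m G e}"
    unfolding SV by (force intro: image_eqI[where x = "of_real _"])
  then have "finite SV"
    using cmat_eigenvalues_finite_nonempty(1)[OF assms(1)] finite_surj by blast
  moreover obtain e where e: "cmat_eigenvalue m G e"
    using cmat_eigenvalues_finite_nonempty(2)[OF assms(1)] by blast
  have "sqrt (Re e) \<in> SV"
  proof -
    have eq: "of_real ((sqrt (Re e))\<^sup>2) = e" using eig[folded G_def, OF e] by simp
    show ?thesis unfolding SV mem_Collect_eq eq using e eig[folded G_def, OF e] by simp
  qed
  then have "SV \<noteq> {}" by blast
  ultimately have "Min SV \<in> SV" by (rule Min_in)
  then have "Min SV \<ge> 0" and eig_min: "cmat_eigenvalue m G (of_real ((Min SV)\<^sup>2))"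
    unfolding SV by blast+
  moreover have "1 - bt \<le> (Min SV)\<^sup>2" "(Min SV)\<^sup>2 \<le> 1"
    using eig[folded G_def, OF eig_min] by (simp_all only: Re_complex_of_real)
  ultimately have \<sigma>: "Min SV \<ge> 0" "1 - bt \<le> (Min SV)\<^sup>2" "(Min SV)\<^sup>2 \<le> 1" by simp_all
  then have "Min SV \<le> 1" by (simp add: power_le_one_iff)
  with \<sigma> have "sin (arccos (Min SV)) = sqrt (1 - (Min SV)\<^sup>2)" by (intro sin_arccos) auto
  also have "\<dots> \<le> sqrt bt" using \<sigma>(2) by simp
  finally show ?thesis unfolding SV_def .
qed

lemma H2_sqnorm_minus_orthonormal_lincomb:
  assumes bs: "H2_orthonormal bs" "\<And>b. b \<in> set bs \<Longrightarrow> H2_regular b" and x: "H2_regular x"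
  defines "n \<equiv> length bs"
  shows "H2_sqnorm (\<lambda>z. x z - (\<Sum>j<n. d j * (bs ! j) z))
    = H2_sqnorm x - (\<Sum>j<n. (cmod (H2_inner x (bs ! j)))\<^sup>2)
      + (\<Sum>j<n. (cmod (d j - cnj (H2_inner x (bs ! j))))\<^sup>2)"
proof -
  define y where "y = (\<lambda>z. \<Sum>j<n. d j * (bs ! j) z)"
  define p where "p = (\<Sum>j<n. d j * H2_inner x (bs ! j))"
  have y: "H2_regular y" unfolding y_def n_def using bs by (intro H2_regular_lincomb) auto
  have xy: "H2_inner x y = p"
    unfolding y_def p_def n_def using bs x by (intro H2_inner_lincomb_right) auto
  have yy: "H2_inner y y = (\<Sum>j<n. cnj (d j) * d j)"
    unfolding y_def n_def by (rule H2_inner_orthonormal_lincomb[OF bs])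
  have expand: "H2_inner (\<lambda>z. x z - y z) (\<lambda>z. x z - y z) = H2_inner x x - p - cnj p + H2_inner y y"
    using H2_inner_diff_left[OF H2_regular_diff[OF x y] x y] H2_inner_diff_right[OF x x y]
      H2_inner_diff_right[OF y x y] H2_inner_commute[of y x] xy by simp
  have "H2_sqnorm (\<lambda>z. x z - y z) = Re (H2_inner (\<lambda>z. x z - y z) (\<lambda>z. x z - y z))"
    by (simp add: H2_inner_self)
  also have "\<dots> = H2_sqnorm x - 2 * Re p + (\<Sum>j<n. (cmod (d j))\<^sup>2)"
    unfolding expand yy by (simp add: H2_inner_self Re_sum cnj_mult_self)
  also have "\<dots> = H2_sqnorm x - (\<Sum>j<n. (cmod (H2_inner x (bs ! j)))\<^sup>2)
      + (\<Sum>j<n. (cmod (d j - cnj (H2_inner x (bs ! j))))\<^sup>2)"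
  proof -
    have "(cmod (a - cnj b))\<^sup>2 = (cmod a)\<^sup>2 - 2 * Re (a * b) + (cmod b)\<^sup>2" for a b :: complex
      unfolding cmod_power2 by (simp add: power2_eq_square algebra_simps)
    then show ?thesis by (simp add: p_def Re_sum sum.distrib sum_subtractf sum_distrib_left)
  qed
  finally show ?thesis unfolding y_def .
qed

lemma H2_sqnorm_orthonormal_lincomb:
  assumes "H2_orthonormal bs" "\<And>b. b \<in> set bs \<Longrightarrow> H2_regular b"
  shows "H2_sqnorm (\<lambda>z. \<Sum>i<length bs. c i * (bs ! i) z) = (\<Sum>i<length bs. (cmod (c i))\<^sup>2)"
proof -
  have "H2_inner (\<lambda>z. \<Sum>i<length bs. c i * (bs ! i) z) (\<lambda>z. \<Sum>i<length bs. c i * (bs ! i) z)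
      = (\<Sum>i<length bs. cnj (c i) * c i)"
    by (rule H2_inner_orthonormal_lincomb[OF assms])
  then have "of_real (H2_sqnorm (\<lambda>z. \<Sum>i<length bs. c i * (bs ! i) z))
      = (of_real (\<Sum>i<length bs. (cmod (c i))\<^sup>2) :: complex)"
    by (simp only: H2_inner_self of_real_sum cnj_mult_self)
  then show ?thesis by (simp only: of_real_eq_iff)
qed

lemma gram_eigenvalue_bounds:
  fixes bx bys :: "(complex \<Rightarrow> complex) list"
  assumes bx: "H2_orthonormal bx" "\<And>b. b \<in> set bx \<Longrightarrow> H2_regular b"
    and bys: "H2_orthonormal bys" "\<And>b. b \<in> set bys \<Longrightarrow> H2_regular b"
    and approx: "\<And>v. \<exists>d. H2_sqnorm (\<lambda>z. (\<Sum>i<length bx. v i * (bx ! i) z) - (\<Sum>j<length bys. d j * (bys ! j) z))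
      \<le> bt * (\<Sum>i<length bx. (cmod (v i))\<^sup>2)"
    and eig: "cmat_eigenvalue (length bx)
      (\<lambda>i k. \<Sum>j<length bys. H2_inner (bx ! i) (bys ! j) * cnj (H2_inner (bx ! k) (bys ! j))) e"
  shows "e = of_real (Re e) \<and> 0 \<le> Re e \<and> 1 - bt \<le> Re e \<and> Re e \<le> 1"
proof -
  define m n where "m = length bx" and "n = length bys"
  obtain v where "\<exists>i<m. v i \<noteq> 0" and eigvec:
    "\<And>i. i < m \<Longrightarrow> (\<Sum>k<m. (\<Sum>j<n. H2_inner (bx ! i) (bys ! j) * cnj (H2_inner (bx ! k) (bys ! j))) * v k) = e * v i"
    using eig unfolding cmat_eigenvalue_def m_def n_def by blast
  define S where "S = (\<Sum>i<m. (cmod (v i))\<^sup>2)"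
  have "S > 0"
    unfolding S_def using \<open>\<exists>i<m. v i \<noteq> 0\<close> by (auto intro!: sum_pos2)
  define x where "x = (\<lambda>z. \<Sum>i<m. v i * (bx ! i) z)"
  have x: "H2_regular x" unfolding x_def m_def using bx by (intro H2_regular_lincomb) auto
  have norm_x: "H2_sqnorm x = S"
    unfolding x_def S_def m_def by (rule H2_sqnorm_orthonormal_lincomb[OF bx])
  define B where "B = (\<Sum>j<n. (cmod (H2_inner x (bys ! j)))\<^sup>2)"
  have "H2_inner x (bys ! j) = (\<Sum>i<m. cnj (v i) * H2_inner (bx ! i) (bys ! j))" if "j < n" for j
    unfolding x_def m_def using bx bys that n_def by (intro H2_inner_lincomb_left) auto
  then have "e * of_real S = of_real B"
    unfolding S_def B_def using gram_eigenvalue_eq[OF eigvec] by simp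
  then have e: "e = of_real (B / S)" using \<open>S > 0\<close> by (simp add: field_simps)
  have upper: "B \<le> S"
    using H2_sqnorm_minus_orthonormal_lincomb[OF bys x, of "\<lambda>j. cnj (H2_inner x (bys ! j))"] norm_x
      H2_sqnorm_nonneg[of "\<lambda>z. x z - (\<Sum>j<length bys. cnj (H2_inner x (bys ! j)) * (bys ! j) z)"]
    by (simp add: B_def n_def)
  obtain d where d: "H2_sqnorm (\<lambda>z. x z - (\<Sum>j<n. d j * (bys ! j) z)) \<le> bt * S"
    using approx[of v] unfolding x_def S_def m_def n_def by blast
  have "0 \<le> (\<Sum>j<length bys. (cmod (d j - cnj (H2_inner x (bys ! j))))\<^sup>2)"
    by (simp add: sum_nonneg)
  then have lower: "S - B \<le> bt * S"
    using d H2_sqnorm_minus_orthonormal_lincomb[OF bys x, of d] norm_x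
    unfolding B_def n_def by linarith
  have "0 \<le> B" unfolding B_def by (simp add: sum_nonneg)
  with upper lower \<open>S > 0\<close> show ?thesis unfolding e by (simp add: field_simps)
qed

lemma is_onb_length_eq_dim:
  assumes "is_onb X bs" "\<And>f. f \<in> X \<Longrightarrow> H2_regular f"
  shows "length bs = cfun.dim X"
proof -
  have bs: "set bs \<subseteq> X" "X \<subseteq> cfun.span (set bs)" "H2_orthonormal bs"
    using assms(1) unfolding is_onb_iff cspan_eq_span by auto
  then have "distinct bs" "cfun.independent (set bs)"
    using H2_orthonormal_independent assms(2) by blast+
  moreover have "cfun.span X = cfun.span (set bs)"
    using bs(1,2) unfolding cfun.span_eq by (auto intro: cfun.span_base)
  ultimately show ?thesis
    by (metis cfun.dim_eq_card_independent cfun.dim_span distinct_card)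
qed

lemma is_onb_lincomb_approx:
  assumes X: "is_onb X bx" "cfun.subspace X" "\<And>b. b \<in> set bx \<Longrightarrow> H2_regular b"
    and Y: "is_onb Y bys"
    and approx: "\<And>x. x \<in> X \<Longrightarrow> \<exists>y\<in>Y. H2_sqnorm (\<lambda>z. x z - y z) \<le> bt * H2_sqnorm x"
  shows "\<exists>d. H2_sqnorm (\<lambda>z. (\<Sum>i<length bx. v i * (bx ! i) z) - (\<Sum>j<length bys. d j * (bys ! j) z))
    \<le> bt * (\<Sum>i<length bx. (cmod (v i))\<^sup>2)"
proof -
  define x where "x = (\<lambda>z. \<Sum>i<length bx. v i * (bx ! i) z)"
  have "x \<in> cfun.span X"
    unfolding x_def using X(1) by (intro lincomb_in_span cfun.span_base) (auto simp: is_onb_iff)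
  then have "x \<in> X" using cfun.span_eq_iff[THEN iffD2, OF X(2)] by simp
  then obtain y where "y \<in> Y" "H2_sqnorm (\<lambda>z. x z - y z) \<le> bt * H2_sqnorm x"
    using approx by blast
  moreover obtain d where "y = (\<lambda>z. \<Sum>j<length bys. d j * (bys ! j) z)"
    using \<open>y \<in> Y\<close> Y unfolding is_onb_iff cspan_def by blast
  moreover have "H2_sqnorm x = (\<Sum>i<length bx. (cmod (v i))\<^sup>2)"
    using X(1) unfolding x_def is_onb_iff by (intro H2_sqnorm_orthonormal_lincomb X(3)) auto
  ultimately show ?thesis unfolding x_def by auto
qed

lemma sin_phi_max_le:
  assumes X: "\<exists>bs. is_onb X bs" "cfun.subspace X" "\<And>f. f \<in> X \<Longrightarrow> H2_regular f" "\<exists>x\<in>X. x \<noteq> 0"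
    and Y: "\<exists>bs. is_onb Y bs" "\<And>f. f \<in> Y \<Longrightarrow> H2_regular f"
    and dim: "cfun.dim X \<le> cfun.dim Y"
    and approx: "\<And>x. x \<in> X \<Longrightarrow> \<exists>y\<in>Y. H2_sqnorm (\<lambda>z. x z - y z) \<le> bt * H2_sqnorm x"
  shows "sin (phi_max X Y) \<le> sqrt bt"
proof -
  define bx where "bx = (SOME bs. is_onb X bs)"
  define bys where "bys = (SOME bs. is_onb Y bs)"
  have onb: "is_onb X bx" "is_onb Y bys"
    unfolding bx_def bys_def using X(1) Y(1) by (auto intro: someI_ex)
  then have on: "H2_orthonormal bx" "H2_orthonormal bys"
    and reg: "\<And>b. b \<in> set bx \<Longrightarrow> H2_regular b" "\<And>b. b \<in> set bys \<Longrightarrow> H2_regular b"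
    using X(3) Y(2) unfolding is_onb_iff by auto
  have "length bx \<le> length bys"
    using dim is_onb_length_eq_dim[OF onb(1) X(3)] is_onb_length_eq_dim[OF onb(2) Y(2)] by simp
  moreover have "bx \<noteq> []"
    using X(4) onb(1) by (auto simp: is_onb_iff cspan_def zero_fun_def)
  ultimately show ?thesis
    unfolding phi_max_def Let_def bx_def[symmetric] bys_def[symmetric]
    by (intro sin_arccos_Min_singular_values_le gram_eigenvalue_bounds[OF on(1) reg(1) on(2) reg(2)]
        is_onb_lincomb_approx[OF onb(1) X(2) reg(1) onb(2) approx]) (auto simp: Suc_le_eq)
qed

lemma sum_norm_matrix_vector_le:
  fixes v :: "nat \<Rightarrow> complex"
  shows "(\<Sum>k<n. cmod (\<Sum>i<m. v i * a i k)) \<le> (\<Sum>i<m. \<Sum>k<n. cmod (a i k)) * (\<Sum>i<m. cmod (v i))"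
proof -
  have "(\<Sum>k<n. cmod (\<Sum>i<m. v i * a i k)) \<le> (\<Sum>k<n. \<Sum>i<m. cmod (v i) * cmod (a i k))"
    by (intro sum_mono order_trans[OF norm_sum]) (simp add: norm_mult)
  also have "\<dots> = (\<Sum>i<m. cmod (v i) * (\<Sum>k<n. cmod (a i k)))"
    by (simp add: sum.swap[of _ "{..<n}"] sum_distrib_left)
  also have "\<dots> \<le> (\<Sum>i<m. cmod (v i) * (\<Sum>i<m. \<Sum>k<n. cmod (a i k)))"
    by (intro sum_mono mult_left_mono member_le_sum) (auto intro: sum_nonneg)
  also have "\<dots> = (\<Sum>i<m. cmod (v i)) * (\<Sum>i<m. \<Sum>k<n. cmod (a i k))"
    by (rule sum_distrib_right[symmetric])
  finally show ?thesis by (simp only: mult.commute[of "\<Sum>i<m. cmod (v i)"])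
qed

lemma cspan_coeffs_bound:
  assumes "\<And>f. f \<in> set xs \<Longrightarrow> H2_regular f" "H2_definite_on (cspan xs)"
  obtains C where "C \<ge> 0" "\<And>x. x \<in> cspan xs \<Longrightarrow> \<exists>c. x = (\<lambda>z. \<Sum>k<length xs. c k * (xs ! k) z) \<and>
      (\<Sum>k<length xs. cmod (c k))\<^sup>2 \<le> C * H2_sqnorm x"
proof -
  obtain bs where bs: "is_onb (cspan xs) bs" using exists_is_onb_cspan[OF assms] by blast
  define m n where "m = length bs" and "n = length xs"
  have bs_reg: "\<And>b. b \<in> set bs \<Longrightarrow> H2_regular b" and bs_on: "H2_orthonormal bs"
    using bs assms(1) H2_regular_span unfolding is_onb_iff cspan_eq_span by blast+
  have "\<forall>i. \<exists>a. i < m \<longrightarrow> bs ! i = (\<lambda>z. \<Sum>k<n. a k * (xs ! k) z)"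
    using bs unfolding is_onb_iff m_def n_def cspan_def by (auto dest: nth_mem)
  then obtain coef where coef: "\<And>i. i < m \<Longrightarrow> bs ! i = (\<lambda>z. \<Sum>k<n. coef i k * (xs ! k) z)"
    by metis
  define B where "B = (\<Sum>i<m. \<Sum>k<n. cmod (coef i k))"
  show ?thesis
  proof (rule that)
    show "0 \<le> B\<^sup>2 * real m" by simp
  next
    fix x assume "x \<in> cspan xs"
    then obtain v where x: "x = (\<lambda>z. \<Sum>i<m. v i * (bs ! i) z)"
      using bs unfolding is_onb_iff cspan_def m_def by blast
    define c where "c k = (\<Sum>i<m. v i * coef i k)" for k
    have x_eq: "x = (\<lambda>z. \<Sum>k<n. c k * (xs ! k) z)"
      unfolding x c_def using coef
      by (simp add: fun_eq_iff sum_distrib_left sum_distrib_right mult.assoc sum.swap[of _ "{..<m}"])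
    have "(\<Sum>k<n. cmod (c k)) \<le> B * (\<Sum>i<m. cmod (v i))"
      unfolding c_def B_def by (rule sum_norm_matrix_vector_le)
    then have "(\<Sum>k<n. cmod (c k))\<^sup>2 \<le> B\<^sup>2 * (\<Sum>i<m. cmod (v i))\<^sup>2"
      by (metis power_mono power_mult_distrib sum_nonneg norm_ge_zero)
    also have "\<dots> \<le> B\<^sup>2 * (real m * (\<Sum>i<m. (cmod (v i))\<^sup>2))"
      using Cauchy_Schwarz_ineq_sum[of "\<lambda>i. 1" "\<lambda>i. cmod (v i)" "{..<m}"]
      by (intro mult_left_mono) auto
    also have "\<dots> = B\<^sup>2 * real m * H2_sqnorm x"
      using H2_sqnorm_orthonormal_lincomb[OF bs_on bs_reg, of v] by (simp add: x m_def)
    finally show "\<exists>c. x = (\<lambda>z. \<Sum>k<length xs. c k * (xs ! k) z) \<and>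
        (\<Sum>k<length xs. cmod (c k))\<^sup>2 \<le> B\<^sup>2 * real m * H2_sqnorm x"
      using x_eq n_def by blast
  qed
qed

lemma norm_lincomb_diff_le:
  fixes c a b :: "nat \<Rightarrow> complex"
  assumes "\<eta> \<ge> 0" "\<And>k. k < n \<Longrightarrow> (cmod (a k - b k))\<^sup>2 \<le> \<eta>"
  shows "(cmod ((\<Sum>k<n. c k * a k) - (\<Sum>k<n. c k * b k)))\<^sup>2 \<le> (\<Sum>k<n. cmod (c k))\<^sup>2 * \<eta>"
proof -
  have "cmod ((\<Sum>k<n. c k * a k) - (\<Sum>k<n. c k * b k)) = cmod (\<Sum>k<n. c k * (a k - b k))"
    by (simp add: sum_subtractf right_diff_distrib)
  also have "\<dots> \<le> (\<Sum>k<n. cmod (c k) * cmod (a k - b k))"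
    by (rule order_trans[OF norm_sum]) (simp add: norm_mult)
  also have "\<dots> \<le> (\<Sum>k<n. cmod (c k) * sqrt \<eta>)"
    using assms(2) by (intro sum_mono mult_left_mono real_le_rsqrt) auto
  finally have "cmod ((\<Sum>k<n. c k * a k) - (\<Sum>k<n. c k * b k)) \<le> (\<Sum>k<n. cmod (c k)) * sqrt \<eta>"
    by (simp add: sum_distrib_right)
  then have "(cmod ((\<Sum>k<n. c k * a k) - (\<Sum>k<n. c k * b k)))\<^sup>2 \<le> ((\<Sum>k<n. cmod (c k)) * sqrt \<eta>)\<^sup>2"
    by (intro power_mono) auto
  with assms(1) show ?thesis by (simp add: power_mult_distrib)
qed

lemma cspan_approx_by_generators:
  assumes coeffs: "\<And>x. x \<in> cspan xs \<Longrightarrow> \<exists>c. x = (\<lambda>z. \<Sum>k<length xs. c k * (xs ! k) z) \<and>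
      (\<Sum>k<length xs. cmod (c k))\<^sup>2 \<le> C * H2_sqnorm x"
    and xs: "\<And>f. f \<in> set xs \<Longrightarrow> H2_regular f"
    and Y: "cfun.subspace Y" "\<And>f. f \<in> Y \<Longrightarrow> H2_regular f"
    and gen: "\<And>f. f \<in> set xs \<Longrightarrow>
      \<exists>y\<in>Y. \<forall>\<omega>::real. (cmod (f (\<i> * of_real \<omega>) - y (\<i> * of_real \<omega>)))\<^sup>2 \<le> \<eta> / (1 + \<omega>\<^sup>2)"
    and "\<eta> \<ge> 0" "x \<in> cspan xs"
  shows "\<exists>y\<in>Y. H2_sqnorm (\<lambda>z. x z - y z) \<le> C * \<eta> / 2 * H2_sqnorm x"
proof -
  define n where "n = length xs"
  obtain c where x: "x = (\<lambda>z. \<Sum>k<n. c k * (xs ! k) z)"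
    and c: "(\<Sum>k<n. cmod (c k))\<^sup>2 \<le> C * H2_sqnorm x"
    using coeffs[OF \<open>x \<in> cspan xs\<close>] unfolding n_def by blast
  have "\<forall>k. \<exists>y. k < n \<longrightarrow> y \<in> Y \<and>
      (\<forall>\<omega>::real. (cmod ((xs ! k) (\<i> * of_real \<omega>) - y (\<i> * of_real \<omega>)))\<^sup>2 \<le> \<eta> / (1 + \<omega>\<^sup>2))"
    using gen[OF nth_mem] unfolding n_def by blast
  then obtain yk where yk: "\<And>k. k < n \<Longrightarrow> yk k \<in> Y"
    "\<And>k \<omega>. k < n \<Longrightarrow> (cmod ((xs ! k) (\<i> * of_real \<omega>) - yk k (\<i> * of_real \<omega>)))\<^sup>2 \<le> \<eta> / (1 + \<omega>\<^sup>2)"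
    by metis
  define y where "y = (\<lambda>z. \<Sum>k<n. c k * yk k z)"
  have "y \<in> cfun.span Y" unfolding y_def using yk(1) by (intro lincomb_in_span cfun.span_base) auto
  then have "y \<in> Y" using cfun.span_eq_iff[THEN iffD2, OF Y(1)] by simp
  have "H2_regular x"
    using xs \<open>x \<in> cspan xs\<close> unfolding cspan_eq_span by (rule H2_regular_span)
  then have "H2_regular (\<lambda>z. x z - y z)" using Y(2)[OF \<open>y \<in> Y\<close>] by (rule H2_regular_diff)
  moreover have "(cmod (x (\<i> * of_real \<omega>) - y (\<i> * of_real \<omega>)))\<^sup>2
      \<le> (\<Sum>k<n. cmod (c k))\<^sup>2 * \<eta> / (1 + \<omega>\<^sup>2)" for \<omega> :: real
    using norm_lincomb_diff_le[of "\<eta> / (1 + \<omega>\<^sup>2)" n "\<lambda>k. (xs ! k) (\<i> * of_real \<omega>)"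
        "\<lambda>k. yk k (\<i> * of_real \<omega>)" c] yk(2) \<open>\<eta> \<ge> 0\<close>
    by (simp add: x y_def)
  ultimately have "H2_sqnorm (\<lambda>z. x z - y z) \<le> (\<Sum>k<n. cmod (c k))\<^sup>2 * \<eta> / 2"
    by (rule H2_sqnorm_le)
  also have "\<dots> \<le> C * \<eta> / 2 * H2_sqnorm x"
    using mult_right_mono[OF c \<open>\<eta> \<ge> 0\<close>] by (simp add: field_simps)
  finally show ?thesis using \<open>y \<in> Y\<close> by blast
qed

lemma dim_Tspace_le: "cfun.dim (Tspace ls) \<le> 2 * length ls"
  using cfun.dim_le_card'[of "set (Tbasis ls)"] card_length[of "Tbasis ls"]
  unfolding Tspace_eq_cspan cspan_eq_span cfun.dim_span length_Tbasis by simp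

lemma dim_Vspace:
  assumes "distinct mus" "\<And>\<mu>. \<mu> \<in> set mus \<Longrightarrow> Re \<mu> \<noteq> 0"
  shows "cfun.dim (Vspace mus) = length mus"
proof -
  note indep = axis_independent_imp_independent[OF axis_independent_Vbasis[OF assms]]
  show ?thesis
    using cfun.dim_eq_card_independent[OF indep(2)] distinct_card[OF indep(1)]
    by (simp add: Vspace_def cspan_eq_span cfun.dim_span)
qed

lemma Tspace_approx_by_Vspace:
  assumes "distinct ls" "\<And>l. l \<in> set ls \<Longrightarrow> Re l < 0"
  obtains K where "K \<ge> 0"
    "\<And>\<epsilon> mus x. (\<And>l. l \<in> set ls \<Longrightarrow> \<epsilon> \<le> - Re l / 2) \<Longrightarrow> has_mirror_pairs \<epsilon> ls mus \<Longrightarrow>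
      (\<And>\<mu>. \<mu> \<in> set mus \<Longrightarrow> Re \<mu> \<noteq> 0) \<Longrightarrow> x \<in> Tspace ls \<Longrightarrow>
      \<exists>y\<in>Vspace mus. H2_sqnorm (\<lambda>z. x z - y z) \<le> K * \<epsilon>\<^sup>2 * H2_sqnorm x"
proof -
  have reg: "\<And>f. f \<in> set (Tbasis ls) \<Longrightarrow> H2_regular f"
    using assms(2) by (intro H2_regular_Tbasis) force
  have "H2_definite_on (cspan (Tbasis ls))"
    using assms by (intro H2_definite_on_cspan[OF reg] axis_independent_Tbasis) force+
  then obtain C where "C \<ge> 0" and coeffs: "\<And>x. x \<in> cspan (Tbasis ls) \<Longrightarrow>
      \<exists>c. x = (\<lambda>z. \<Sum>k<length (Tbasis ls). c k * (Tbasis ls ! k) z) \<and>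
        (\<Sum>k<length (Tbasis ls). cmod (c k))\<^sup>2 \<le> C * H2_sqnorm x"
    using cspan_coeffs_bound[OF reg] by blast
  obtain A where "A \<ge> 0" and gen: "\<And>\<epsilon> mus f. (\<And>l. l \<in> set ls \<Longrightarrow> \<epsilon> \<le> - Re l / 2) \<Longrightarrow>
      has_mirror_pairs \<epsilon> ls mus \<Longrightarrow> f \<in> set (Tbasis ls) \<Longrightarrow>
      \<exists>y\<in>Vspace mus. \<forall>\<omega>::real. (cmod (f (\<i> * of_real \<omega>) - y (\<i> * of_real \<omega>)))\<^sup>2 \<le> A * \<epsilon>\<^sup>2 / (1 + \<omega>\<^sup>2)"
    using Tbasis_approx_in_Vspace[OF assms(2)] by blast
  show ?thesis
  proof (rule that[of "C * A / 2"])
    show "0 \<le> C * A / 2" using \<open>C \<ge> 0\<close> \<open>A \<ge> 0\<close> by simp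
  next
    fix \<epsilon> mus x
    assume "\<And>l. l \<in> set ls \<Longrightarrow> \<epsilon> \<le> - Re l / 2" "has_mirror_pairs \<epsilon> ls mus"
      and V: "\<And>\<mu>. \<mu> \<in> set mus \<Longrightarrow> Re \<mu> \<noteq> 0" and "x \<in> Tspace ls"
    have "cfun.subspace (Vspace mus)" unfolding Vspace_def cspan_eq_span by (rule cfun.subspace_span)
    moreover have "\<And>f. f \<in> Vspace mus \<Longrightarrow> H2_regular f"
      unfolding Vspace_def cspan_eq_span by (rule H2_regular_span[OF H2_regular_Vbasis[OF V]])
    ultimately show "\<exists>y\<in>Vspace mus. H2_sqnorm (\<lambda>z. x z - y z) \<le> C * A / 2 * \<epsilon>\<^sup>2 * H2_sqnorm x"
      using cspan_approx_by_generators[OF coeffs reg, of "Vspace mus" "A * \<epsilon>\<^sup>2" x] gen \<open>A \<ge> 0\<close>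
        \<open>x \<in> Tspace ls\<close> \<open>has_mirror_pairs \<epsilon> ls mus\<close> \<open>\<And>l. l \<in> set ls \<Longrightarrow> \<epsilon> \<le> - Re l / 2\<close>
      by (simp add: Tspace_eq_cspan mult_ac)
  qed
qed

lemma sin_phi_max_Tspace_Vspace_le:
  assumes T: "distinct ls" "ls \<noteq> []" "\<And>l. l \<in> set ls \<Longrightarrow> Re l < 0"
    and V: "distinct mus" "\<And>\<mu>. \<mu> \<in> set mus \<Longrightarrow> Re \<mu> \<noteq> 0" "2 * length ls \<le> length mus"
    and approx: "\<And>x. x \<in> Tspace ls \<Longrightarrow> \<exists>y\<in>Vspace mus. H2_sqnorm (\<lambda>z. x z - y z) \<le> bt * H2_sqnorm x"
  shows "sin (phi_max (Tspace ls) (Vspace mus)) \<le> sqrt bt"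
proof (rule sin_phi_max_le[OF _ _ _ _ _ _ _ approx])
  have T_reg: "\<And>f. f \<in> set (Tbasis ls) \<Longrightarrow> H2_regular f"
    using T(3) by (intro H2_regular_Tbasis) force
  have V_reg: "\<And>f. f \<in> set (map vfun mus) \<Longrightarrow> H2_regular f"
    using V(2) by (rule H2_regular_Vbasis)
  show "\<exists>bs. is_onb (Tspace ls) bs"
    unfolding Tspace_eq_cspan using T
    by (intro exists_is_onb_cspan[OF T_reg] H2_definite_on_cspan[OF T_reg] axis_independent_Tbasis) force+
  show "\<exists>bs. is_onb (Vspace mus) bs"
    unfolding Vspace_def using V
    by (intro exists_is_onb_cspan[OF V_reg] H2_definite_on_cspan[OF V_reg] axis_independent_Vbasis)
  show "cfun.subspace (Tspace ls)"
    unfolding Tspace_eq_cspan cspan_eq_span by (rule cfun.subspace_span)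
  show "\<And>f. f \<in> Tspace ls \<Longrightarrow> H2_regular f"
    unfolding Tspace_eq_cspan cspan_eq_span by (rule H2_regular_span[OF T_reg])
  show "\<And>f. f \<in> Vspace mus \<Longrightarrow> H2_regular f"
    unfolding Vspace_def cspan_eq_span by (rule H2_regular_span[OF V_reg])
  show "cfun.dim (Tspace ls) \<le> cfun.dim (Vspace mus)"
    using dim_Tspace_le[of ls] dim_Vspace[OF V(1,2)] V(3) by linarith
  obtain l where "l \<in> set ls" using T(2) by fastforce
  then have "vfun (- cnj l) \<in> Tspace ls"
    unfolding Tspace_eq_cspan cspan_eq_span set_Tbasis by (intro cfun.span_base) blast
  moreover have "vfun (- cnj l) 0 \<noteq> 0" using T(3)[OF \<open>l \<in> set ls\<close>] by (auto simp: vfun_def)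
  ultimately show "\<exists>x\<in>Tspace ls. x \<noteq> 0" by (metis zero_fun_def)
qed

lemma index_assignment_mirror_pairs:
  fixes a :: "nat \<Rightarrow> nat \<Rightarrow> nat"
  assumes inj: "inj_on (\<lambda>(k, t). a k t) ({..<length ls} \<times> {..<3})" and "distinct mus"
    and a: "\<forall>k<length ls. \<forall>t<3. a k t < length mus \<and> cmod (mus ! (a k t) + cnj (ls ! k)) \<le> \<epsilon>"
  shows "3 * length ls \<le> length mus" "has_mirror_pairs \<epsilon> ls mus"
proof -
  have "(\<lambda>(k, t). a k t) ` ({..<length ls} \<times> {..<3}) \<subseteq> {..<length mus}" using a by auto
  from card_mono[OF _ this] show "3 * length ls \<le> length mus"
    using card_image[OF inj] by simp
  show "has_mirror_pairs \<epsilon> ls mus"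
    unfolding has_mirror_pairs_def
  proof
    fix l assume "l \<in> set ls"
    then obtain k where k: "k < length ls" "l = ls ! k" by (auto simp: in_set_conv_nth)
    have "a k 0 \<noteq> a k 1" using inj_onD[OF inj, of "(k, 0)" "(k, 1)"] k(1) by auto
    then have "mus ! a k 0 \<noteq> mus ! a k 1" using a k(1) \<open>distinct mus\<close> by (simp add: nth_eq_iff_index_eq)
    with a k show "\<exists>\<mu>1\<in>set mus. \<exists>\<mu>2\<in>set mus. \<mu>1 \<noteq> \<mu>2 \<and> cmod (\<mu>1 + cnj l) \<le> \<epsilon> \<and> cmod (\<mu>2 + cnj l) \<le> \<epsilon>"
      by (metis nth_mem less_numeral_extra(1) one_less_numeral_iff semiring_norm(77) zero_less_numeral)
  qed
qed

lemma sin_phi_max_Tspace_Vspace_bound: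
  assumes "distinct ls" "ls \<noteq> []" "\<And>l. l \<in> set ls \<Longrightarrow> Re l < 0"
  obtains C where "\<And>\<epsilon> mus. 0 < \<epsilon> \<Longrightarrow> distinct mus \<Longrightarrow> (\<And>\<mu>. \<mu> \<in> set mus \<Longrightarrow> Re \<mu> \<noteq> 0) \<Longrightarrow>
    2 * length ls \<le> length mus \<Longrightarrow> has_mirror_pairs \<epsilon> ls mus \<Longrightarrow>
    sin (phi_max (Tspace ls) (Vspace mus)) \<le> C * \<epsilon>"
proof -
  obtain K where "K \<ge> 0" and approx: "\<And>\<epsilon> mus x. (\<And>l. l \<in> set ls \<Longrightarrow> \<epsilon> \<le> - Re l / 2) \<Longrightarrow>
      has_mirror_pairs \<epsilon> ls mus \<Longrightarrow> (\<And>\<mu>. \<mu> \<in> set mus \<Longrightarrow> Re \<mu> \<noteq> 0) \<Longrightarrow> x \<in> Tspace ls \<Longrightarrow>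
      \<exists>y\<in>Vspace mus. H2_sqnorm (\<lambda>z. x z - y z) \<le> K * \<epsilon>\<^sup>2 * H2_sqnorm x"
    using Tspace_approx_by_Vspace[OF assms(1,3)] by blast
  define \<delta> where "\<delta> = Min ((\<lambda>l. - Re l / 2) ` set ls)"
  have "\<delta> > 0" using assms(2,3) by (simp add: \<delta>_def)
  have \<delta>_le: "\<And>l. l \<in> set ls \<Longrightarrow> \<delta> \<le> - Re l / 2" unfolding \<delta>_def by (intro Min_le) auto
  show ?thesis
  proof (rule that[of "max (sqrt K) (1 / \<delta>)"])
    fix \<epsilon> :: real and mus assume "0 < \<epsilon>" and V: "distinct mus" "\<And>\<mu>. \<mu> \<in> set mus \<Longrightarrow> Re \<mu> \<noteq> 0"
      "2 * length ls \<le> length mus" "has_mirror_pairs \<epsilon> ls mus"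
    show "sin (phi_max (Tspace ls) (Vspace mus)) \<le> max (sqrt K) (1 / \<delta>) * \<epsilon>"
    proof (cases "\<epsilon> \<le> \<delta>")
      case True
      with \<delta>_le have \<epsilon>: "\<And>l. l \<in> set ls \<Longrightarrow> \<epsilon> \<le> - Re l / 2" by (meson order_trans)
      have "sin (phi_max (Tspace ls) (Vspace mus)) \<le> sqrt (K * \<epsilon>\<^sup>2)"
        by (rule sin_phi_max_Tspace_Vspace_le[OF assms V(1-3) approx[OF \<epsilon> V(4) V(2)]])
      also have "\<dots> \<le> max (sqrt K) (1 / \<delta>) * \<epsilon>"
        using \<open>\<epsilon> > 0\<close> \<open>K \<ge> 0\<close> by (simp add: real_sqrt_mult)
      finally show ?thesis .
    next
      case False
      have "sin (phi_max (Tspace ls) (Vspace mus)) \<le> 1" by (rule sin_le_one)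
      also have "\<dots> \<le> 1 / \<delta> * \<epsilon>" using False \<open>\<delta> > 0\<close> by (simp add: field_simps)
      also have "\<dots> \<le> max (sqrt K) (1 / \<delta>) * \<epsilon>" using \<open>\<epsilon> > 0\<close> by (intro mult_right_mono) auto
      finally show ?thesis .
    qed
  qed
qed

theorem theorem4p2:
  fixes ls :: "complex list"
  assumes "length ls \<ge> 1"
    and "distinct ls"
    and "\<forall>l\<in>set ls. Re l < 0"
  shows "\<exists>C. \<forall>\<epsilon>>0. \<forall>mus :: complex list.
           distinct mus \<and> (\<forall>m\<in>set mus. Re m > 0) \<and>
           (\<exists>a :: nat \<Rightarrow> nat \<Rightarrow> nat.
              inj_on (\<lambda>(k, t). a k t) ({..<length ls} \<times> {..<3}) \<and>
              (\<forall>k<length ls. \<forall>t<3. a k t < length mus \<and>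
                 cmod (mus ! (a k t) + cnj (ls ! k)) \<le> \<epsilon>))
           \<longrightarrow> sin (phi_max (Tspace ls) (Vspace mus)) \<le> C * \<epsilon>"
proof -
  have "ls \<noteq> []" "\<And>l. l \<in> set ls \<Longrightarrow> Re l < 0" using assms(1,3) by auto
  then obtain C where C: "\<And>\<epsilon> mus. 0 < \<epsilon> \<Longrightarrow> distinct mus \<Longrightarrow> (\<And>\<mu>. \<mu> \<in> set mus \<Longrightarrow> Re \<mu> \<noteq> 0) \<Longrightarrow>
      2 * length ls \<le> length mus \<Longrightarrow> has_mirror_pairs \<epsilon> ls mus \<Longrightarrow>
      sin (phi_max (Tspace ls) (Vspace mus)) \<le> C * \<epsilon>"
    using sin_phi_max_Tspace_Vspace_bound[OF assms(2)] by blast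
  show ?thesis
  proof (intro exI[of _ C] allI impI)
    fix \<epsilon> :: real and mus :: "complex list"
    assume "\<epsilon> > 0" and "distinct mus \<and> (\<forall>m\<in>set mus. Re m > 0) \<and>
      (\<exists>a :: nat \<Rightarrow> nat \<Rightarrow> nat. inj_on (\<lambda>(k, t). a k t) ({..<length ls} \<times> {..<3}) \<and>
        (\<forall>k<length ls. \<forall>t<3. a k t < length mus \<and> cmod (mus ! (a k t) + cnj (ls ! k)) \<le> \<epsilon>))"
    then obtain a :: "nat \<Rightarrow> nat \<Rightarrow> nat" where mus: "distinct mus" "\<forall>m\<in>set mus. Re m > 0"
      and a: "inj_on (\<lambda>(k, t). a k t) ({..<length ls} \<times> {..<3})"
        "\<forall>k<length ls. \<forall>t<3. a k t < length mus \<and> cmod (mus ! (a k t) + cnj (ls ! k)) \<le> \<epsilon>"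
      by blast
    note counts = index_assignment_mirror_pairs[OF a(1) mus(1) a(2)]
    show "sin (phi_max (Tspace ls) (Vspace mus)) \<le> C * \<epsilon>"
      by (rule C[OF \<open>\<epsilon> > 0\<close> mus(1) _ _ counts(2)]) (use mus(2) counts(1) in auto)
  qed
qed

end
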